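(* Let $\mathcal{F}$ be a family of irreducible and reversible finite Markov chains. (1) Continuous time, $\mathcal{F}=(\mu_n,\mathcal{S}_n,L_n,\pi_n)_{n\ge1}$: if $\liminf_n\pi_n(|\mu_n/\pi_n|^2)>1$, then $\mathcal{F}$ has an $L^2$-cutoff if and only if it has an $L^2$-pre-cutoff. (2) Discrete time, $\mathcal{F}=(\mu_n,\mathcal{S}_n,K_n,\pi_n)_{n\ge1}$: if $\liminf_n\pi_n(|\mu_nK_n/\pi_n|^2)>1$ and $T_{n,2}(\mu_n,\epsilon_0)\to\infty$ for some $\epsilon_0\in(0,\infty)$, then $\mathcal{F}$ has an $L^2$-cutoff if and only if it has an $L^2$-pre-cutoff.
   Context: For a finite irreducible Markov chain on $\mathcal{S}$ with stationary distribution $\pi$ and initial distribution $\mu$: in discrete time with transition matrix $K$, $d_2(\mu,m)=\big(\sum_y|\mu K^m(y)/\pi(y)-1|^2\pi(y)\big)^{1/2}$ for integers $m\ge0$; in continuous time with generator $L$ and $H_t=e^{tL}$, $d_2(\mu,t)=\big(\sum_y|\mu H_t(y)/\pi(y)-1|^2\pi(y)\big)^{1/2}$, $t\ge0$. Here $\pi(|f|^2)=\sum_y|f(y)|^2\pi(y)$ and $(\mu/\pi)(y)=\mu(y)/\pi(y)$. The $L^2$-mixing time is $T_2(\mu,\epsilon)=\min\{t\ge0:d_2(\mu,t)\le\epsilon\}$ ($t$ integer in discrete time). $d_{n,2},T_{n,2}$ denote these for the $n$th chain. $L^2$-cutoff (discrete time): there is $t_n>0$ with $d_{n,2}(\mu_n,\lceil(1+a)t_n\rceil)\to0$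 and $d_{n,2}(\mu_n,\lfloor(1-a)t_n\rfloor)\to\infty$ for all $a\in(0,1)$. $L^2$-pre-cutoff (discrete time): there are $t_n>0$ and $0<A<B$ with $\limsup_n d_{n,2}(\mu_n,\lceil Bt_n\rceil)=0$ and $\liminf_n d_{n,2}(\mu_n,\lfloor At_n\rfloor)>0$. In continuous time both definitions are the same with $\lceil\cdot\rceil,\lfloor\cdot\rfloor$ removed. *)

theory Defs
  imports "HOL-Analysis.Analysis"
begin

text \<open>Kernels on a finite state space S are functions of type 'a => 'a => real,
  only their values on S x S matter.\<close>

fun mpow :: "'a set \<Rightarrow> ('a \<Rightarrow> 'a \<Rightarrow> real) \<Rightarrow> nat \<Rightarrow> 'a \<Rightarrow> 'a \<Rightarrow> real" where
  "mpow S K 0 x y = (if x = y then 1 else 0)"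
| "mpow S K (Suc m) x y = (\<Sum>z\<in>S. mpow S K m x z * K z y)"

definition heat :: "'a set \<Rightarrow> ('a \<Rightarrow> 'a \<Rightarrow> real) \<Rightarrow> real \<Rightarrow> 'a \<Rightarrow> 'a \<Rightarrow> real" where
  "heat S L t x y = (\<Sum>k. t ^ k / fact k * mpow S L k x y)"

definition prob_on :: "'a set \<Rightarrow> ('a \<Rightarrow> real) \<Rightarrow> bool" where
  "prob_on S \<mu> \<longleftrightarrow> (\<forall>x\<in>S. \<mu> x \<ge> 0) \<and> sum \<mu> S = 1"

definition stochastic :: "'a set \<Rightarrow> ('a \<Rightarrow> 'a \<Rightarrow> real) \<Rightarrow> bool" where
  "stochastic S K \<longleftrightarrow> (\<forall>x\<in>S. \<forall>y\<in>S. K x y \<ge> 0) \<and> (\<forall>x\<in>S. (\<Sum>y\<in>S. K x y) = 1)"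

definition generator :: "'a set \<Rightarrow> ('a \<Rightarrow> 'a \<Rightarrow> real) \<Rightarrow> bool" where
  "generator S L \<longleftrightarrow> (\<forall>x\<in>S. \<forall>y\<in>S. x \<noteq> y \<longrightarrow> L x y \<ge> 0) \<and> (\<forall>x\<in>S. (\<Sum>y\<in>S. L x y) = 0)"

definition irreducible_disc :: "'a set \<Rightarrow> ('a \<Rightarrow> 'a \<Rightarrow> real) \<Rightarrow> bool" where
  "irreducible_disc S K \<longleftrightarrow> (\<forall>x\<in>S. \<forall>y\<in>S. \<exists>m. mpow S K m x y > 0)"

text \<open>Continuous time: every state reachable through jumps of positive rate.\<close>
definition irreducible_cont :: "'a set \<Rightarrow> ('a \<Rightarrow> 'a \<Rightarrow> real) \<Rightarrow> bool" where
  "irreducible_cont S L \<longleftrightarrow> irreducible_disc S (\<lambda>x y. if x = y then 0 else L x y)"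

definition stationary_disc :: "'a set \<Rightarrow> ('a \<Rightarrow> 'a \<Rightarrow> real) \<Rightarrow> ('a \<Rightarrow> real) \<Rightarrow> bool" where
  "stationary_disc S K \<pi> \<longleftrightarrow> prob_on S \<pi> \<and> (\<forall>y\<in>S. (\<Sum>x\<in>S. \<pi> x * K x y) = \<pi> y)"

definition stationary_cont :: "'a set \<Rightarrow> ('a \<Rightarrow> 'a \<Rightarrow> real) \<Rightarrow> ('a \<Rightarrow> real) \<Rightarrow> bool" where
  "stationary_cont S L \<pi> \<longleftrightarrow> prob_on S \<pi> \<and> (\<forall>y\<in>S. (\<Sum>x\<in>S. \<pi> x * L x y) = 0)"

definition reversible :: "'a set \<Rightarrow> ('a \<Rightarrow> 'a \<Rightarrow> real) \<Rightarrow> ('a \<Rightarrow> real) \<Rightarrow> bool" where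
  "reversible S K \<pi> \<longleftrightarrow> (\<forall>x\<in>S. \<forall>y\<in>S. \<pi> x * K x y = \<pi> y * K y x)"

definition disc_chain :: "'a set \<Rightarrow> ('a \<Rightarrow> 'a \<Rightarrow> real) \<Rightarrow> ('a \<Rightarrow> real) \<Rightarrow> ('a \<Rightarrow> real) \<Rightarrow> bool" where
  "disc_chain S K \<pi> \<mu> \<longleftrightarrow> finite S \<and> S \<noteq> {} \<and> stochastic S K \<and> irreducible_disc S K
     \<and> stationary_disc S K \<pi> \<and> reversible S K \<pi> \<and> prob_on S \<mu>"

definition cont_chain :: "'a set \<Rightarrow> ('a \<Rightarrow> 'a \<Rightarrow> real) \<Rightarrow> ('a \<Rightarrow> real) \<Rightarrow> ('a \<Rightarrow> real) \<Rightarrow> bool" where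
  "cont_chain S L \<pi> \<mu> \<longleftrightarrow> finite S \<and> S \<noteq> {} \<and> generator S L \<and> irreducible_cont S L
     \<and> stationary_cont S L \<pi> \<and> reversible S L \<pi> \<and> prob_on S \<mu>"

definition pi_sq :: "'a set \<Rightarrow> ('a \<Rightarrow> real) \<Rightarrow> ('a \<Rightarrow> real) \<Rightarrow> real" where
  "pi_sq S \<pi> f = (\<Sum>y\<in>S. \<bar>f y\<bar>^2 * \<pi> y)"

definition d2_disc :: "'a set \<Rightarrow> ('a \<Rightarrow> 'a \<Rightarrow> real) \<Rightarrow> ('a \<Rightarrow> real) \<Rightarrow> ('a \<Rightarrow> real) \<Rightarrow> nat \<Rightarrow> real" where
  "d2_disc S K \<pi> \<mu> m =
     sqrt (pi_sq S \<pi> (\<lambda>y. (\<Sum>x\<in>S. \<mu> x * mpow S K m x y) / \<pi> y - 1))"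

definition d2_cont :: "'a set \<Rightarrow> ('a \<Rightarrow> 'a \<Rightarrow> real) \<Rightarrow> ('a \<Rightarrow> real) \<Rightarrow> ('a \<Rightarrow> real) \<Rightarrow> real \<Rightarrow> real" where
  "d2_cont S L \<pi> \<mu> t =
     sqrt (pi_sq S \<pi> (\<lambda>y. (\<Sum>x\<in>S. \<mu> x * heat S L t x y) / \<pi> y - 1))"

text \<open>L2 mixing times, valued in ereal (infinity if the set is empty).\<close>
definition T2_disc :: "'a set \<Rightarrow> ('a \<Rightarrow> 'a \<Rightarrow> real) \<Rightarrow> ('a \<Rightarrow> real) \<Rightarrow> ('a \<Rightarrow> real) \<Rightarrow> real \<Rightarrow> ereal" where
  "T2_disc S K \<pi> \<mu> \<epsilon> = (INF m\<in>{m::nat. d2_disc S K \<pi> \<mu> m \<le> \<epsilon>}. ereal (real m))"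

definition T2_cont :: "'a set \<Rightarrow> ('a \<Rightarrow> 'a \<Rightarrow> real) \<Rightarrow> ('a \<Rightarrow> real) \<Rightarrow> ('a \<Rightarrow> real) \<Rightarrow> real \<Rightarrow> ereal" where
  "T2_cont S L \<pi> \<mu> \<epsilon> = (INF t\<in>{t::real. 0 \<le> t \<and> d2_cont S L \<pi> \<mu> t \<le> \<epsilon>}. ereal t)"

definition cutoff_disc :: "(nat \<Rightarrow> nat \<Rightarrow> real) \<Rightarrow> bool" where
  "cutoff_disc d \<longleftrightarrow> (\<exists>t::nat \<Rightarrow> real. (\<forall>n. t n > 0) \<and>
     (\<forall>a. 0 < a \<and> a < 1 \<longrightarrow>
        (\<lambda>n. d n (nat \<lceil>(1 + a) * t n\<rceil>)) \<longlonglongrightarrow> 0 \<and>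
        filterlim (\<lambda>n. d n (nat \<lfloor>(1 - a) * t n\<rfloor>)) at_top sequentially))"

definition precutoff_disc :: "(nat \<Rightarrow> nat \<Rightarrow> real) \<Rightarrow> bool" where
  "precutoff_disc d \<longleftrightarrow> (\<exists>(t::nat \<Rightarrow> real) A B. (\<forall>n. t n > 0) \<and> 0 < A \<and> A < B \<and>
     limsup (\<lambda>n. ereal (d n (nat \<lceil>B * t n\<rceil>))) = 0 \<and>
     liminf (\<lambda>n. ereal (d n (nat \<lfloor>A * t n\<rfloor>))) > 0)"

definition cutoff_cont :: "(nat \<Rightarrow> real \<Rightarrow> real) \<Rightarrow> bool" where
  "cutoff_cont d \<longleftrightarrow> (\<exists>t::nat \<Rightarrow> real. (\<forall>n. t n > 0) \<and>
     (\<forall>a. 0 < a \<and> a < 1 \<longrightarrow>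
        (\<lambda>n. d n ((1 + a) * t n)) \<longlonglongrightarrow> 0 \<and>
        filterlim (\<lambda>n. d n ((1 - a) * t n)) at_top sequentially))"

definition precutoff_cont :: "(nat \<Rightarrow> real \<Rightarrow> real) \<Rightarrow> bool" where
  "precutoff_cont d \<longleftrightarrow> (\<exists>(t::nat \<Rightarrow> real) A B. (\<forall>n. t n > 0) \<and> 0 < A \<and> A < B \<and>
     limsup (\<lambda>n. ereal (d n (B * t n))) = 0 \<and>
     liminf (\<lambda>n. ereal (d n (A * t n))) > 0)"

end

theory Submission
  imports Defs
begin

text \<open>
  The \<open>L\<^sup>2\<close>-distance of a reversible chain is \<open>d t = \<parallel>u t\<parallel>\<close> in \<open>L\<^sup>2(\<pi>)\<close>, where
  \<open>u t = \<mu>H\<^sub>t/\<pi> - 1\<close> evolves under the self-adjoint operator given by the reversible kernel.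
  Self-adjointness and Cauchy-Schwarz make \<open>d\<close> nonincreasing and log-convex:
  \<open>d(m+1)\<^sup>2 \<le> d(m) d(m+2)\<close> in discrete time, \<open>f'\<^sup>2 \<le> f f''\<close> for \<open>f = d\<^sup>2\<close> in continuous time;
  the hypothesis on \<open>\<pi>(|\<mu>/\<pi>|\<^sup>2)\<close> makes \<open>d\<close> positive, so \<open>ln d\<close> is a convex function.

  Given a pre-cutoff at times \<open>A t\<^sub>n < B t\<^sub>n\<close>, let \<open>\<tau>\<^sub>n\<close> be a time in between where \<open>ln d\<^sub>n\<close>
  crosses a fixed level \<open>l\<close>. As \<open>l - ln d\<^sub>n(B t\<^sub>n) \<rightarrow> \<infinity>\<close> and the window \<open>[\<tau>\<^sub>n, B t\<^sub>n]\<close> has length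
  \<open>O(\<tau>\<^sub>n)\<close>, convexity forces \<open>ln d\<^sub>n\<close> to lie proportionally far above \<open>l\<close> at \<open>(1 - a)\<tau>\<^sub>n\<close>
  and far below it at \<open>(1 + a)\<tau>\<^sub>n\<close>: a cutoff at \<open>\<tau>\<^sub>n\<close>. In discrete time, \<open>T\<^sub>2 \<rightarrow> \<infinity>\<close> makes the
  windows long enough to absorb the rounding of times to integers.
\<close>

section \<open>Cutoff for log-convex distance profiles\<close>

lemma tendsto_zero_if_limsup_eq_zero:
  fixes x :: "nat \<Rightarrow> real"
  assumes "\<And>n. 0 \<le> x n" "limsup (\<lambda>n. ereal (x n)) = 0"
  shows "x \<longlonglongrightarrow> 0"
proof -
  have "0 \<le> liminf (\<lambda>n. ereal (x n))"
    by (rule Liminf_bounded) (use assms in auto)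
  then have "liminf (\<lambda>n. ereal (x n)) = 0"
    using Liminf_le_Limsup[of sequentially "\<lambda>n. ereal (x n)"] assms by simp
  then have "(\<lambda>n. ereal (x n)) \<longlonglongrightarrow> 0"
    using assms tendsto_iff_Liminf_eq_Limsup[OF trivial_limit_sequentially] by blast
  then show ?thesis by (simp add: zero_ereal_def)
qed

lemma limsup_eq_zero_if_tendsto_zero:
  fixes x :: "nat \<Rightarrow> real"
  assumes "x \<longlonglongrightarrow> 0"
  shows "limsup (\<lambda>n. ereal (x n)) = 0"
  using lim_imp_Limsup[OF trivial_limit_sequentially, of "\<lambda>n. ereal (x n)" 0] assms
  by (simp add: zero_ereal_def)

lemma eventually_gt_if_liminf_pos:
  fixes x :: "nat \<Rightarrow> real"
  assumes "0 < liminf (\<lambda>n. ereal (x n))"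
  obtains \<delta> where "0 < \<delta>" "eventually (\<lambda>n. \<delta> < x n) sequentially"
proof -
  obtain z where z: "0 < ereal z" "ereal z < liminf (\<lambda>n. ereal (x n))"
    using ereal_dense2[OF assms] by blast
  then have "eventually (\<lambda>n. ereal z < ereal (x n)) sequentially"
    using less_LiminfD by blast
  with z that show ?thesis by simp
qed

lemma liminf_pos_if_filterlim_at_top:
  fixes x :: "nat \<Rightarrow> real"
  assumes "filterlim x at_top sequentially"
  shows "0 < liminf (\<lambda>n. ereal (x n))"
proof -
  have "(\<lambda>n. ereal (x n)) \<longlonglongrightarrow> \<infinity>"
    unfolding tendsto_PInfty using assms[unfolded filterlim_at_top_dense] by simp
  then show ?thesis by (simp add: lim_imp_Liminf[OF trivial_limit_sequentially])
qed

lemma cutoff_cont_imp_precutoff_cont: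
  assumes "cutoff_cont d"
  shows "precutoff_cont d"
proof -
  obtain t :: "nat \<Rightarrow> real" where "\<forall>n. 0 < t n" and h: "\<And>a :: real. 0 < a \<and> a < 1 \<Longrightarrow>
      (\<lambda>n. d n ((1 + a) * t n)) \<longlonglongrightarrow> 0 \<and> filterlim (\<lambda>n. d n ((1 - a) * t n)) at_top sequentially"
    using assms unfolding cutoff_cont_def by blast
  have "0 < (1/2 :: real) \<and> (1/2 :: real) < 1" by simp
  note lim = h[OF this]
  have "limsup (\<lambda>n. ereal (d n ((1 + 1/2) * t n))) = 0"
    by (rule limsup_eq_zero_if_tendsto_zero[OF conjunct1[OF lim]])
  moreover have "0 < liminf (\<lambda>n. ereal (d n ((1 - 1/2) * t n)))"
    by (rule liminf_pos_if_filterlim_at_top[OF conjunct2[OF lim]])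
  moreover have "0 < 1 - (1/2 :: real)" "1 - 1/2 < (1 + 1/2 :: real)" by simp_all
  ultimately show ?thesis
    unfolding precutoff_cont_def using \<open>\<forall>n. 0 < t n\<close>
    by (intro exI[of _ t] exI[of _ "1 - 1/2"] exI[of _ "1 + 1/2"]) blast
qed

lemma cutoff_disc_imp_precutoff_disc:
  assumes "cutoff_disc d"
  shows "precutoff_disc d"
proof -
  obtain t :: "nat \<Rightarrow> real" where "\<forall>n. 0 < t n" and h: "\<And>a :: real. 0 < a \<and> a < 1 \<Longrightarrow>
      (\<lambda>n. d n (nat \<lceil>(1 + a) * t n\<rceil>)) \<longlonglongrightarrow> 0
      \<and> filterlim (\<lambda>n. d n (nat \<lfloor>(1 - a) * t n\<rfloor>)) at_top sequentially"
    using assms unfolding cutoff_disc_def by blast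
  have "0 < (1/2 :: real) \<and> (1/2 :: real) < 1" by simp
  note lim = h[OF this]
  have "limsup (\<lambda>n. ereal (d n (nat \<lceil>(1 + 1/2) * t n\<rceil>))) = 0"
    by (rule limsup_eq_zero_if_tendsto_zero[OF conjunct1[OF lim]])
  moreover have "0 < liminf (\<lambda>n. ereal (d n (nat \<lfloor>(1 - 1/2) * t n\<rfloor>)))"
    by (rule liminf_pos_if_filterlim_at_top[OF conjunct2[OF lim]])
  moreover have "0 < 1 - (1/2 :: real)" "1 - 1/2 < (1 + 1/2 :: real)" by simp_all
  ultimately show ?thesis
    unfolding precutoff_disc_def using \<open>\<forall>n. 0 < t n\<close>
    by (intro exI[of _ t] exI[of _ "1 - 1/2"] exI[of _ "1 + 1/2"]) blast
qed

lemma filterlim_at_top_if_ln_ge: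
  fixes u r :: "'a \<Rightarrow> real"
  assumes r: "filterlim r at_top F" and "0 < \<kappa>"
    and bound: "eventually (\<lambda>n. 0 < u n \<and> l + \<kappa> * r n \<le> ln (u n)) F"
  shows "filterlim u at_top F"
proof -
  have "filterlim (\<lambda>n. l + \<kappa> * r n) at_top F"
    by (intro filterlim_tendsto_add_at_top[OF tendsto_const]
        filterlim_tendsto_pos_mult_at_top[OF tendsto_const \<open>0 < \<kappa>\<close> r])
  then have "filterlim (\<lambda>n. ln (u n)) at_top F"
    by (rule filterlim_at_top_mono) (use bound in \<open>auto elim: eventually_mono\<close>)
  then have "filterlim (\<lambda>n. exp (ln (u n))) at_top F"
    by (rule filterlim_compose[OF exp_at_top])
  then show ?thesis
    by (rule filterlim_at_top_mono) (use bound in \<open>auto elim: eventually_mono\<close>)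
qed

lemma tendsto_zero_if_ln_le:
  fixes u r :: "'a \<Rightarrow> real"
  assumes r: "filterlim r at_top F" and "0 < \<kappa>"
    and bound: "eventually (\<lambda>n. 0 < u n \<and> ln (u n) \<le> l - \<kappa> * r n) F"
  shows "(u \<longlongrightarrow> 0) F"
proof -
  have "filterlim (\<lambda>n. - l + \<kappa> * r n) at_top F"
    by (intro filterlim_tendsto_add_at_top[OF tendsto_const]
        filterlim_tendsto_pos_mult_at_top[OF tendsto_const \<open>0 < \<kappa>\<close> r])
  then have "filterlim (\<lambda>n. - ln (u n)) at_top F"
    by (rule filterlim_at_top_mono) (use bound in \<open>auto elim: eventually_mono\<close>)
  then have "filterlim (\<lambda>n. ln (u n)) at_bot F"
    by (simp add: filterlim_uminus_at_bot)
  then have "((\<lambda>n. exp (ln (u n))) \<longlongrightarrow> 0) F"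
    by (rule filterlim_compose[OF exp_at_bot])
  then show ?thesis
    by (rule Lim_transform_eventually) (use bound in \<open>auto elim: eventually_mono\<close>)
qed

lemma filterlim_const_minus_ln_at_top:
  fixes v :: "'a \<Rightarrow> real"
  assumes "(v \<longlongrightarrow> 0) F" "eventually (\<lambda>n. 0 < v n) F"
  shows "filterlim (\<lambda>n. l - ln (v n)) at_top F"
proof -
  have "filterlim (\<lambda>n. ln (v n)) at_bot F"
    using filterlim_compose[OF ln_at_0 tendsto_imp_filterlim_at_right[OF assms]] .
  then have "filterlim (\<lambda>n. - ln (v n)) at_top F"
    by (simp add: filterlim_uminus_at_bot)
  from filterlim_tendsto_add_at_top[OF tendsto_const this] show ?thesis
    by (simp add: algebra_simps)
qed

lemma secant_lower_bound:
  fixes x \<tau> b fx f\<tau> fb l \<kappa> :: real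
  assumes chord: "(b - x) * f\<tau> \<le> (b - \<tau>) * fx + (\<tau> - x) * fb"
    and "x \<le> \<tau>" "\<tau> < b" "\<kappa> * (b - \<tau>) \<le> \<tau> - x" "fb \<le> l" "l \<le> f\<tau>" "0 \<le> \<kappa>"
  shows "l + \<kappa> * (l - fb) \<le> fx"
proof -
  have "\<kappa> * (b - \<tau>) * (l - fb) \<le> (\<tau> - x) * (l - fb)"
    using assms by (intro mult_right_mono) auto
  moreover have "(b - x) * l \<le> (b - x) * f\<tau>"
    using assms by (intro mult_left_mono) auto
  ultimately have "(b - \<tau>) * (l + \<kappa> * (l - fb)) \<le> (b - \<tau>) * fx"
    using chord by (simp add: algebra_simps)
  then show ?thesis using \<open>\<tau> < b\<close> by simp
qed

lemma secant_upper_bound: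
  fixes \<tau> y b f\<tau> fy fb l \<kappa> :: real
  assumes chord: "(b - \<tau>) * fy \<le> (b - y) * f\<tau> + (y - \<tau>) * fb"
    and "\<tau> \<le> y" "y \<le> b" "\<tau> < b" "\<kappa> * (b - \<tau>) \<le> y - \<tau>" "fb \<le> l" "f\<tau> \<le> l" "0 \<le> \<kappa>"
  shows "fy \<le> l - \<kappa> * (l - fb)"
proof -
  have "\<kappa> * (b - \<tau>) * (l - fb) \<le> (y - \<tau>) * (l - fb)"
    using assms by (intro mult_right_mono) auto
  moreover have "(b - y) * f\<tau> \<le> (b - y) * l"
    using assms by (intro mult_left_mono) auto
  ultimately have "(b - \<tau>) * fy \<le> (b - \<tau>) * (l - \<kappa> * (l - fb))"
    using chord by (simp add: algebra_simps)
  then show ?thesis using \<open>\<tau> < b\<close> by simp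
qed

lemma convex_on_chord:
  fixes g :: "real \<Rightarrow> real"
  assumes "convex_on {0..} g" "0 \<le> x" "x \<le> y" "y \<le> z" "x < z"
  shows "(z - x) * g y \<le> (z - y) * g x + (y - x) * g z"
proof -
  have "convex_on {x..z} g" by (rule convex_on_subset[OF assms(1)]) (use assms in auto)
  then have "g y \<le> (g z - g x) / (z - x) * (y - x) + g x"
    using convex_onD_Icc'[of x z g y] assms by simp
  then have "(z - x) * g y \<le> (z - x) * ((g z - g x) / (z - x) * (y - x) + g x)"
    using assms by (intro mult_left_mono) auto
  also have "\<dots> = (g z - g x) * (y - x) + (z - x) * g x"
    using assms by (simp add: distrib_left)
  finally show ?thesis by (simp add: algebra_simps)
qed

lemma convex_antimono_window_bounds:
  fixes g :: "real \<Rightarrow> real"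
  assumes cvx: "convex_on {0..} g" and anti: "antimono_on {0..} g"
    and "0 < \<tau>" "\<tau> < b" "g \<tau> = l" "g b \<le> l"
    and "0 < a" "a < 1" "0 \<le> \<kappa>" "\<kappa> \<le> 1" "\<kappa> * (b - \<tau>) \<le> a * \<tau>"
  shows "l + \<kappa> * (l - g b) \<le> g ((1 - a) * \<tau>)"
    and "g ((1 + a) * \<tau>) \<le> l - \<kappa> * (l - g b)"
proof -
  define x y where "x = (1 - a) * \<tau>" and "y = (1 + a) * \<tau>"
  have "0 < a * \<tau>" using assms by simp
  then have xy: "0 \<le> x" "\<tau> - x = a * \<tau>" "y - \<tau> = a * \<tau>"
    using assms by (simp_all add: x_def y_def algebra_simps)
  have "(b - x) * g \<tau> \<le> (b - \<tau>) * g x + (\<tau> - x) * g b"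
    by (rule convex_on_chord[OF cvx]) (use assms xy \<open>0 < a * \<tau>\<close> in linarith)+
  then show "l + \<kappa> * (l - g b) \<le> g ((1 - a) * \<tau>)"
    unfolding x_def[symmetric]
    by (rule secant_lower_bound) (use assms xy \<open>0 < a * \<tau>\<close> in linarith)+
  show "g ((1 + a) * \<tau>) \<le> l - \<kappa> * (l - g b)"
    unfolding y_def[symmetric]
  proof (cases "y \<le> b")
    case True
    have "(b - \<tau>) * g y \<le> (b - y) * g \<tau> + (y - \<tau>) * g b"
      by (rule convex_on_chord[OF cvx]) (use assms xy True \<open>0 < a * \<tau>\<close> in linarith)+
    then show "g y \<le> l - \<kappa> * (l - g b)"
      by (rule secant_upper_bound) (use assms xy True \<open>0 < a * \<tau>\<close> in linarith)+
  next
    case False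
    then have "g y \<le> g b"
      using assms xy \<open>0 < a * \<tau>\<close> by (intro monotone_onD[OF anti]) auto
    moreover have "\<kappa> * (l - g b) \<le> l - g b"
      using assms by (intro mult_left_le_one_le) auto
    ultimately show "g y \<le> l - \<kappa> * (l - g b)" by linarith
  qed
qed

lemma cutoff_cont_if_log_bounds:
  fixes d :: "nat \<Rightarrow> real \<Rightarrow> real"
  assumes "\<And>n. 0 < \<tau> n" and gap: "filterlim r at_top sequentially"
    and \<kappa>: "\<And>a. 0 < a \<Longrightarrow> a < 1 \<Longrightarrow> 0 < \<kappa> a"
    and bounds: "\<And>a. 0 < a \<Longrightarrow> a < 1 \<Longrightarrow> eventually (\<lambda>n.
      0 < d n ((1 - a) * \<tau> n) \<and> l + \<kappa> a * r n \<le> ln (d n ((1 - a) * \<tau> n)) \<and>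
      0 < d n ((1 + a) * \<tau> n) \<and> ln (d n ((1 + a) * \<tau> n)) \<le> l - \<kappa> a * r n) sequentially"
  shows "cutoff_cont d"
  unfolding cutoff_cont_def
proof (intro exI[of _ \<tau>] conjI allI impI)
  fix a :: real assume "0 < a \<and> a < 1"
  then have "0 < \<kappa> a" and ev: "eventually (\<lambda>n.
      0 < d n ((1 - a) * \<tau> n) \<and> l + \<kappa> a * r n \<le> ln (d n ((1 - a) * \<tau> n)) \<and>
      0 < d n ((1 + a) * \<tau> n) \<and> ln (d n ((1 + a) * \<tau> n)) \<le> l - \<kappa> a * r n) sequentially"
    using \<kappa> bounds by auto
  show "(\<lambda>n. d n ((1 + a) * \<tau> n)) \<longlonglongrightarrow> 0"
    by (rule tendsto_zero_if_ln_le[OF gap \<open>0 < \<kappa> a\<close>]) (use ev in \<open>eventually_elim, blast\<close>)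
  show "filterlim (\<lambda>n. d n ((1 - a) * \<tau> n)) at_top sequentially"
    by (rule filterlim_at_top_if_ln_ge[OF gap \<open>0 < \<kappa> a\<close>]) (use ev in \<open>eventually_elim, blast\<close>)
qed (rule assms)

lemma eventually_pos_choice:
  fixes P :: "'a \<Rightarrow> 'b :: linordered_semidom \<Rightarrow> bool"
  assumes "eventually (\<lambda>n. \<exists>x>0. P n x) F"
  obtains f where "\<And>n. 0 < f n" "eventually (\<lambda>n. P n (f n)) F"
proof
  define f where "f n = (if \<exists>x>0. P n x then SOME x. 0 < x \<and> P n x else 1)" for n
  have f: "0 < f n \<and> P n (f n)" if "\<exists>x>0. P n x" for n
    using someI_ex[of "\<lambda>x. 0 < x \<and> P n x"] that by (simp add: f_def)
  show "0 < f n" for n using f[of n] by (cases "\<exists>x>0. P n x") (auto simp: f_def)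
  show "eventually (\<lambda>n. P n (f n)) F" using assms by eventually_elim (use f in blast)
qed

lemma cont_level_crossing_times:
  fixes d :: "nat \<Rightarrow> real \<Rightarrow> real"
  assumes nonneg: "\<And>n t. 0 \<le> d n t"
    and regular: "eventually (\<lambda>n. (\<forall>t\<ge>0. 0 < d n t) \<and> convex_on {0..} (\<lambda>t. ln (d n t))
       \<and> antimono_on {0..} (d n) \<and> continuous_on {0..} (d n)) sequentially"
    and "precutoff_cont d"
  obtains \<tau> :: "nat \<Rightarrow> real" and A B :: real and t :: "nat \<Rightarrow> real" and l :: real
  where "\<And>n. 0 < \<tau> n" "0 < A" "A < B" "(\<lambda>n. d n (B * t n)) \<longlonglongrightarrow> 0"
    and "eventually (\<lambda>n. (\<forall>s\<ge>0. 0 < d n s) \<and> convex_on {0..} (\<lambda>s. ln (d n s))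
      \<and> antimono_on {0..} (\<lambda>s. ln (d n s))
      \<and> A * t n \<le> \<tau> n \<and> \<tau> n < B * t n \<and> ln (d n (\<tau> n)) = l \<and> ln (d n (B * t n)) < l) sequentially"
proof -
  obtain t A B where t: "\<And>n. 0 < t n" and AB: "0 < A" "A < B"
    and "limsup (\<lambda>n. ereal (d n (B * t n))) = 0" and "0 < liminf (\<lambda>n. ereal (d n (A * t n)))"
    using \<open>precutoff_cont d\<close> unfolding precutoff_cont_def by blast
  then have dB: "(\<lambda>n. d n (B * t n)) \<longlonglongrightarrow> 0"
    by (intro tendsto_zero_if_limsup_eq_zero nonneg)
  obtain \<delta> where "0 < \<delta>" and dA: "eventually (\<lambda>n. \<delta> < d n (A * t n)) sequentially"
    using eventually_gt_if_liminf_pos[OF \<open>0 < liminf _\<close>] by blast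
  have "eventually (\<lambda>n. \<exists>\<tau>>0. (\<forall>s\<ge>0. 0 < d n s) \<and> convex_on {0..} (\<lambda>s. ln (d n s))
      \<and> antimono_on {0..} (\<lambda>s. ln (d n s)) \<and> A * t n \<le> \<tau> \<and> \<tau> < B * t n
      \<and> ln (d n \<tau>) = ln \<delta> \<and> ln (d n (B * t n)) < ln \<delta>) sequentially"
    using regular dA dB[THEN order_tendstoD(2), OF \<open>0 < \<delta>\<close>]
  proof eventually_elim
    case (elim n)
    have pos: "\<And>s. 0 \<le> s \<Longrightarrow> 0 < d n s" and anti: "antimono_on {0..} (d n)"
      and cont: "continuous_on {0..} (d n)" and \<delta>: "\<delta> < d n (A * t n)" "d n (B * t n) < \<delta>"
      using elim by blast+
    have At: "0 < A * t n" "A * t n < B * t n" using AB t[of n] by simp_all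
    have ln_anti: "antimono_on {0..} (\<lambda>s. ln (d n s))"
      by (rule monotone_onI) (use pos monotone_onD[OF anti] in simp)
    have "continuous_on {A * t n..B * t n} (\<lambda>s. ln (d n s))"
    proof (rule continuous_on_ln)
      show "continuous_on {A * t n..B * t n} (d n)"
        by (rule continuous_on_subset[OF cont]) (use At in auto)
      show "\<forall>s\<in>{A * t n..B * t n}. d n s \<noteq> 0"
        using pos At by (metis atLeastAtMost_iff less_imp_le order.trans order_less_irrefl)
    qed
    moreover have below: "ln (d n (B * t n)) < ln \<delta>" and "ln \<delta> < ln (d n (A * t n))"
      using pos[of "A * t n"] pos[of "B * t n"] At \<delta> \<open>0 < \<delta>\<close> by simp_all
    ultimately obtain \<tau> where "A * t n \<le> \<tau>" "\<tau> \<le> B * t n" "ln (d n \<tau>) = ln \<delta>"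
      using IVT2'[of "\<lambda>s. ln (d n s)" "B * t n" "ln \<delta>" "A * t n"] At(2) by force
    moreover have "\<tau> \<noteq> B * t n" using \<open>ln (d n \<tau>) = ln \<delta>\<close> below by auto
    ultimately show ?case using elim ln_anti below At by (intro exI[of _ \<tau>]) auto
  qed
  then obtain \<tau> where "\<And>n. 0 < \<tau> n" and "eventually (\<lambda>n. (\<forall>s\<ge>0. 0 < d n s)
      \<and> convex_on {0..} (\<lambda>s. ln (d n s)) \<and> antimono_on {0..} (\<lambda>s. ln (d n s))
      \<and> A * t n \<le> \<tau> n \<and> \<tau> n < B * t n \<and> ln (d n (\<tau> n)) = ln \<delta> \<and> ln (d n (B * t n)) < ln \<delta>) sequentially"
    by (rule eventually_pos_choice) blast
  with AB dB show thesis by (intro that)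
qed

lemma cutoff_cont_if_precutoff_log_convex:
  fixes d :: "nat \<Rightarrow> real \<Rightarrow> real"
  assumes "\<And>n t. 0 \<le> d n t"
    and "eventually (\<lambda>n. (\<forall>t\<ge>0. 0 < d n t) \<and> convex_on {0..} (\<lambda>t. ln (d n t))
       \<and> antimono_on {0..} (d n) \<and> continuous_on {0..} (d n)) sequentially"
    and "precutoff_cont d"
  shows "cutoff_cont d"
proof -
  obtain \<tau> :: "nat \<Rightarrow> real" and A B :: real and t :: "nat \<Rightarrow> real" and l :: real
    where \<tau>_pos: "\<And>n. 0 < \<tau> n" and AB: "0 < A" "A < B" and dB: "(\<lambda>n. d n (B * t n)) \<longlonglongrightarrow> 0"
    and crossing: "eventually (\<lambda>n. (\<forall>s\<ge>0. 0 < d n s) \<and> convex_on {0..} (\<lambda>s. ln (d n s))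
      \<and> antimono_on {0..} (\<lambda>s. ln (d n s))
      \<and> A * t n \<le> \<tau> n \<and> \<tau> n < B * t n \<and> ln (d n (\<tau> n)) = l \<and> ln (d n (B * t n)) < l) sequentially"
    using cont_level_crossing_times[OF assms] by blast
  have gap: "filterlim (\<lambda>n. l - ln (d n (B * t n))) at_top sequentially"
  proof (rule filterlim_const_minus_ln_at_top[OF dB])
    show "eventually (\<lambda>n. 0 < d n (B * t n)) sequentially"
      using crossing by eventually_elim (use \<tau>_pos in \<open>meson less_imp_le less_trans\<close>)
  qed
  define \<kappa> where "\<kappa> a = min 1 (a * A / (B - A))" for a
  have bounds: "eventually (\<lambda>n.
      0 < d n ((1 - a) * \<tau> n) \<and> l + \<kappa> a * (l - ln (d n (B * t n))) \<le> ln (d n ((1 - a) * \<tau> n)) \<and>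
      0 < d n ((1 + a) * \<tau> n) \<and> ln (d n ((1 + a) * \<tau> n)) \<le> l - \<kappa> a * (l - ln (d n (B * t n))))
      sequentially" if a: "0 < a" "a < 1" for a
    using crossing
  proof eventually_elim
    case (elim n)
    have \<kappa>: "0 \<le> \<kappa> a" "\<kappa> a \<le> 1" using a AB by (auto simp: \<kappa>_def)
    have "\<kappa> a * (B * t n - \<tau> n) \<le> a * A / (B - A) * ((B - A) * t n)"
      using elim \<kappa> a AB by (intro mult_mono) (auto simp: \<kappa>_def algebra_simps)
    also have "\<dots> = a * (A * t n)" using AB by simp
    also have "\<dots> \<le> a * \<tau> n" using elim a by simp
    finally have "\<kappa> a * (B * t n - \<tau> n) \<le> a * \<tau> n" .
    then have "l + \<kappa> a * (l - ln (d n (B * t n))) \<le> ln (d n ((1 - a) * \<tau> n))"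
      "ln (d n ((1 + a) * \<tau> n)) \<le> l - \<kappa> a * (l - ln (d n (B * t n)))"
      using convex_antimono_window_bounds[of "\<lambda>s. ln (d n s)" "\<tau> n" "B * t n" l a "\<kappa> a"]
        elim \<tau>_pos[of n] a \<kappa> by auto
    moreover have "0 < d n ((1 - a) * \<tau> n)" "0 < d n ((1 + a) * \<tau> n)"
      using elim \<tau>_pos[of n] a by simp_all
    ultimately show ?case by blast
  qed
  show ?thesis
    by (rule cutoff_cont_if_log_bounds[OF \<tau>_pos gap _ bounds]) (use AB in \<open>auto simp: \<kappa>_def\<close>)
qed

lemma convex_seq_chord:
  fixes g :: "nat \<Rightarrow> real"
  assumes cvx: "\<And>m. 2 * g (Suc m) \<le> g m + g (Suc (Suc m))" and "i \<le> j" "j \<le> k"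
  shows "(real k - real i) * g j \<le> (real k - real j) * g i + (real j - real i) * g k"
proof -
  define D where "D m = g (Suc m) - g m" for m
  have D_mono: "D m \<le> D m'" if "m \<le> m'" for m m'
  proof (rule lift_Suc_mono_le[of D, OF _ that])
    show "D n \<le> D (Suc n)" for n using cvx[of n] by (simp add: D_def)
  qed
  have "g j - g i = (\<Sum>m = i..<j. D m)" "g k - g j = (\<Sum>m = j..<k. D m)"
    using assms unfolding D_def by (simp_all add: sum_Suc_diff')
  moreover have "(\<Sum>m = i..<j. D m) \<le> of_nat (card {i..<j}) * D j"
    by (rule sum_bounded_above) (auto intro: D_mono)
  moreover have "of_nat (card {j..<k}) * D j \<le> (\<Sum>m = j..<k. D m)"
    by (rule sum_bounded_below) (auto intro: D_mono)
  ultimately have "g j - g i \<le> (real j - real i) * D j" "(real k - real j) * D j \<le> g k - g j"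
    using assms by simp_all
  then have "(real k - real j) * (g j - g i) \<le> (real j - real i) * (g k - g j)"
    using assms by (smt (verit, best) mult.left_commute mult_left_mono of_nat_mono)
  then show ?thesis by (simp add: algebra_simps)
qed

lemma last_level_crossing:
  fixes g :: "nat \<Rightarrow> real"
  assumes "p \<le> q" "l \<le> g p" "g q < l"
  obtains \<tau> where "p \<le> \<tau>" "\<tau> < q" "l \<le> g \<tau>" "g (Suc \<tau>) < l"
proof -
  define M where "M = {m. m \<le> q \<and> l \<le> g m}"
  have "finite M" "p \<in> M" using assms by (auto simp: M_def)
  define \<tau> where "\<tau> = Max M"
  have "\<tau> \<in> M" "p \<le> \<tau>" unfolding \<tau>_def using \<open>finite M\<close> \<open>p \<in> M\<close> by (auto intro: Max_in)
  then have "\<tau> < q" "l \<le> g \<tau>" using assms by (auto simp: M_def le_less)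
  moreover have "g (Suc \<tau>) < l"
  proof (rule ccontr)
    assume "\<not> g (Suc \<tau>) < l"
    then have "Suc \<tau> \<in> M" using \<open>\<tau> < q\<close> by (simp add: M_def)
    then show False using Max_ge[OF \<open>finite M\<close>] by (fastforce simp: \<tau>_def)
  qed
  ultimately show thesis using \<open>p \<le> \<tau>\<close> that by blast
qed

lemma convex_seq_antimono_window_bounds:
  fixes g :: "nat \<Rightarrow> real"
  assumes cvx: "\<And>m. 2 * g (Suc m) \<le> g m + g (Suc (Suc m))" and anti: "antimono g"
    and "\<tau> < b" "l \<le> g \<tau>" "g (Suc \<tau>) < l" "g b \<le> l"
    and "0 < a" "a < 1" "0 \<le> \<kappa>" "\<kappa> \<le> 1" "\<kappa> * (real b - real \<tau>) \<le> a * \<tau> / 2" "2 \<le> a * \<tau>"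
  shows "l + \<kappa> * (l - g b) \<le> g (nat \<lfloor>(1 - a) * \<tau>\<rfloor>)"
    and "g (nat \<lceil>(1 + a) * \<tau>\<rceil>) \<le> l - \<kappa> * (l - g b)"
proof -
  define x y where "x = nat \<lfloor>(1 - a) * \<tau>\<rfloor>" and "y = nat \<lceil>(1 + a) * \<tau>\<rceil>"
  have "real x \<le> (1 - a) * \<tau>" "(1 + a) * \<tau> \<le> real y"
    using assms by (simp_all add: x_def y_def)
  then have xy: "a * \<tau> \<le> real \<tau> - real x" "a * \<tau> \<le> real y - real \<tau>"
    by (simp_all add: algebra_simps)
  then have "x \<le> \<tau>" "Suc \<tau> \<le> y" using assms by linarith+
  have "(real b - real x) * g \<tau> \<le> (real b - real \<tau>) * g x + (real \<tau> - real x) * g b"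
    by (rule convex_seq_chord[of g, OF cvx]) (use \<open>x \<le> \<tau>\<close> \<open>\<tau> < b\<close> in auto)
  then show "l + \<kappa> * (l - g b) \<le> g (nat \<lfloor>(1 - a) * \<tau>\<rfloor>)"
    unfolding x_def[symmetric]
    by (rule secant_lower_bound) (use assms xy \<open>x \<le> \<tau>\<close> in linarith)+
  show "g (nat \<lceil>(1 + a) * \<tau>\<rceil>) \<le> l - \<kappa> * (l - g b)"
    unfolding y_def[symmetric]
  proof (cases "y < b")
    case True
    have chord: "(real b - real (Suc \<tau>)) * g y \<le> (real b - real y) * g (Suc \<tau>) + (real y - real (Suc \<tau>)) * g b"
      by (rule convex_seq_chord[of g, OF cvx]) (use \<open>Suc \<tau> \<le> y\<close> True in auto)
    have window: "\<kappa> * (real b - real (Suc \<tau>)) \<le> real y - real (Suc \<tau>)"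
    proof -
      have "\<kappa> * (real b - real (Suc \<tau>)) \<le> \<kappa> * (real b - real \<tau>)"
        using assms by (intro mult_left_mono) auto
      then show ?thesis using assms xy by simp
    qed
    show "g y \<le> l - \<kappa> * (l - g b)"
      by (rule secant_upper_bound[OF chord _ _ _ window]) (use assms \<open>Suc \<tau> \<le> y\<close> True in linarith)+
  next
    case False
    then have "g y \<le> g b" using anti by (simp add: antimono_def)
    moreover have "\<kappa> * (l - g b) \<le> l - g b"
      using assms by (intro mult_left_le_one_le) auto
    ultimately show "g y \<le> l - \<kappa> * (l - g b)" by linarith
  qed
qed

lemma floor_ceiling_gap:
  fixes A B t :: real
  assumes "2 \<le> A * t" "2 \<le> (B - A) * t"
  shows "A * t / 2 \<le> real (nat \<lfloor>A * t\<rfloor>)" "nat \<lfloor>A * t\<rfloor> \<le> nat \<lceil>B * t\<rceil>"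
    and "real (nat \<lceil>B * t\<rceil>) - real (nat \<lfloor>A * t\<rfloor>) \<le> 2 * (B - A) * t"
proof -
  have Bt: "B * t = A * t + (B - A) * t" by (simp add: algebra_simps)
  have "A * t - 1 < real (nat \<lfloor>A * t\<rfloor>)" "real (nat \<lfloor>A * t\<rfloor>) \<le> A * t"
    "B * t \<le> real (nat \<lceil>B * t\<rceil>)" "real (nat \<lceil>B * t\<rceil>) < B * t + 1"
    using assms Bt by linarith+
  then show "A * t / 2 \<le> real (nat \<lfloor>A * t\<rfloor>)" "nat \<lfloor>A * t\<rfloor> \<le> nat \<lceil>B * t\<rceil>"
    "real (nat \<lceil>B * t\<rceil>) - real (nat \<lfloor>A * t\<rfloor>) \<le> 2 * (B - A) * t"
    using assms Bt by linarith+
qed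

lemma cutoff_disc_if_log_bounds:
  fixes d :: "nat \<Rightarrow> nat \<Rightarrow> real" and \<tau> :: "nat \<Rightarrow> nat"
  assumes "\<And>n. 0 < \<tau> n" and gap: "filterlim r at_top sequentially"
    and \<kappa>: "\<And>a. 0 < a \<Longrightarrow> a < 1 \<Longrightarrow> 0 < \<kappa> a"
    and bounds: "\<And>a :: real. 0 < a \<Longrightarrow> a < 1 \<Longrightarrow> eventually (\<lambda>n.
      0 < d n (nat \<lfloor>(1 - a) * real (\<tau> n)\<rfloor>) \<and> l + \<kappa> a * r n \<le> ln (d n (nat \<lfloor>(1 - a) * real (\<tau> n)\<rfloor>)) \<and>
      0 < d n (nat \<lceil>(1 + a) * real (\<tau> n)\<rceil>) \<and> ln (d n (nat \<lceil>(1 + a) * real (\<tau> n)\<rceil>)) \<le> l - \<kappa> a * r n)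
      sequentially"
  shows "cutoff_disc d"
  unfolding cutoff_disc_def
proof (intro exI[of _ "\<lambda>n. real (\<tau> n)"] conjI allI impI)
  fix a :: real assume a: "0 < a \<and> a < 1"
  then have "0 < \<kappa> a" and ev: "eventually (\<lambda>n.
      0 < d n (nat \<lfloor>(1 - a) * real (\<tau> n)\<rfloor>) \<and> l + \<kappa> a * r n \<le> ln (d n (nat \<lfloor>(1 - a) * real (\<tau> n)\<rfloor>)) \<and>
      0 < d n (nat \<lceil>(1 + a) * real (\<tau> n)\<rceil>) \<and> ln (d n (nat \<lceil>(1 + a) * real (\<tau> n)\<rceil>)) \<le> l - \<kappa> a * r n)
      sequentially"
    using \<kappa> bounds by auto
  show "(\<lambda>n. d n (nat \<lceil>(1 + a) * real (\<tau> n)\<rceil>)) \<longlonglongrightarrow> 0"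
    by (rule tendsto_zero_if_ln_le[OF gap \<open>0 < \<kappa> a\<close>]) (use ev in \<open>eventually_elim, blast\<close>)
  show "filterlim (\<lambda>n. d n (nat \<lfloor>(1 - a) * real (\<tau> n)\<rfloor>)) at_top sequentially"
    by (rule filterlim_at_top_if_ln_ge[OF gap \<open>0 < \<kappa> a\<close>]) (use ev in \<open>eventually_elim, blast\<close>)
qed (use assms in simp)

lemma eventually_ge_if_late_small:
  fixes d :: "nat \<Rightarrow> nat \<Rightarrow> real" and t :: "nat \<Rightarrow> real"
  assumes slow: "\<And>M. eventually (\<lambda>n. \<forall>m\<le>M. \<epsilon> < d n m) sequentially"
    and small: "eventually (\<lambda>n. d n (nat \<lceil>B * t n\<rceil>) < \<epsilon>) sequentially" and "0 < B"
  shows "eventually (\<lambda>n. T \<le> t n) sequentially"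
  using slow[of "nat \<lceil>B * T\<rceil>"] small
proof eventually_elim
  case (elim n)
  then have "\<not> nat \<lceil>B * t n\<rceil> \<le> nat \<lceil>B * T\<rceil>" by (meson less_asym)
  then have "B * T \<le> B * t n" by linarith
  then show ?case using \<open>0 < B\<close> by simp
qed

lemma disc_level_crossing_times:
  fixes d :: "nat \<Rightarrow> nat \<Rightarrow> real"
  assumes nonneg: "\<And>n m. 0 \<le> d n m"
    and regular: "eventually (\<lambda>n. (\<forall>m. 0 < d n m) \<and> antimono (d n)
       \<and> (\<forall>m. 2 * ln (d n (Suc m)) \<le> ln (d n m) + ln (d n (Suc (Suc m))))) sequentially"
    and "0 < \<epsilon>" and slow: "\<And>M. eventually (\<lambda>n. \<forall>m\<le>M. \<epsilon> < d n m) sequentially"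
    and "precutoff_disc d"
  obtains \<tau> :: "nat \<Rightarrow> nat" and A B :: real and t :: "nat \<Rightarrow> real" and l :: real
  where "\<And>n. 0 < \<tau> n" "0 < A" "A < B" "(\<lambda>n. d n (nat \<lceil>B * t n\<rceil>)) \<longlonglongrightarrow> 0"
    and "\<And>T. eventually (\<lambda>n. T \<le> t n) sequentially"
    and "eventually (\<lambda>n. (\<forall>m. 0 < d n m) \<and> antimono (\<lambda>m. ln (d n m))
      \<and> (\<forall>m. 2 * ln (d n (Suc m)) \<le> ln (d n m) + ln (d n (Suc (Suc m))))
      \<and> A * t n / 2 \<le> real (\<tau> n) \<and> \<tau> n < nat \<lceil>B * t n\<rceil>
      \<and> real (nat \<lceil>B * t n\<rceil>) - real (\<tau> n) \<le> 2 * (B - A) * t n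
      \<and> l \<le> ln (d n (\<tau> n)) \<and> ln (d n (Suc (\<tau> n))) < l \<and> ln (d n (nat \<lceil>B * t n\<rceil>)) < l) sequentially"
proof -
  obtain t :: "nat \<Rightarrow> real" and A B :: real where t: "\<And>n. 0 < t n" and AB: "0 < A" "A < B"
    and "limsup (\<lambda>n. ereal (d n (nat \<lceil>B * t n\<rceil>))) = 0"
    and "0 < liminf (\<lambda>n. ereal (d n (nat \<lfloor>A * t n\<rfloor>)))"
    using \<open>precutoff_disc d\<close> unfolding precutoff_disc_def by blast
  define p q where "p n = nat \<lfloor>A * t n\<rfloor>" and "q n = nat \<lceil>B * t n\<rceil>" for n
  have dq: "(\<lambda>n. d n (q n)) \<longlonglongrightarrow> 0"
    unfolding q_def by (intro tendsto_zero_if_limsup_eq_zero nonneg) fact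
  obtain \<delta> where "0 < \<delta>" and dp: "eventually (\<lambda>n. \<delta> < d n (p n)) sequentially"
    using eventually_gt_if_liminf_pos[OF \<open>0 < liminf _\<close>] unfolding p_def by blast
  have t_large: "eventually (\<lambda>n. T \<le> t n) sequentially" for T
    using eventually_ge_if_late_small[OF slow _ order.strict_trans[OF AB]] dq[THEN order_tendstoD(2), OF \<open>0 < \<epsilon>\<close>]
    unfolding q_def by blast
  have "eventually (\<lambda>n. \<exists>\<tau>>0. (\<forall>m. 0 < d n m) \<and> antimono (\<lambda>m. ln (d n m))
      \<and> (\<forall>m. 2 * ln (d n (Suc m)) \<le> ln (d n m) + ln (d n (Suc (Suc m))))
      \<and> A * t n / 2 \<le> real \<tau> \<and> \<tau> < q n \<and> real (q n) - real \<tau> \<le> 2 * (B - A) * t n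
      \<and> ln \<delta> \<le> ln (d n \<tau>) \<and> ln (d n (Suc \<tau>)) < ln \<delta> \<and> ln (d n (q n)) < ln \<delta>) sequentially"
    using regular dp dq[THEN order_tendstoD(2), OF \<open>0 < \<delta>\<close>] t_large[of "2 / A"] t_large[of "2 / (B - A)"]
  proof eventually_elim
    case (elim n)
    have pos: "\<And>m. 0 < d n m" and anti: "antimono (d n)" and \<delta>: "\<delta> < d n (p n)" "d n (q n) < \<delta>"
      using elim by blast+
    have large: "2 \<le> A * t n" "2 \<le> (B - A) * t n"
      using elim(4,5) AB by (simp_all add: pos_divide_le_eq mult.commute)
    note gap = floor_ceiling_gap[OF large, folded p_def q_def]
    have ln_anti: "antimono (\<lambda>m. ln (d n m))"
      by (rule antimonoI) (use pos antimonoD[OF anti] in simp)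
    have below: "ln (d n (q n)) < ln \<delta>" and above: "ln \<delta> < ln (d n (p n))"
      using pos[of "p n"] pos[of "q n"] \<delta> \<open>0 < \<delta>\<close> by simp_all
    obtain \<tau> where "p n \<le> \<tau>" "\<tau> < q n" "ln \<delta> \<le> ln (d n \<tau>)" "ln (d n (Suc \<tau>)) < ln \<delta>"
      by (rule last_level_crossing[of "p n" "q n" "ln \<delta>" "\<lambda>m. ln (d n m)", OF gap(2) less_imp_le[OF above] below])
    moreover from \<open>p n \<le> \<tau>\<close> have "0 < \<tau>" "A * t n / 2 \<le> real \<tau>"
      "real (q n) - real \<tau> \<le> 2 * (B - A) * t n"
      using gap large by linarith+
    ultimately show ?case using elim ln_anti below by (intro exI[of _ \<tau>]) blast
  qed
  then obtain \<tau> where "\<And>n. 0 < \<tau> n" and "eventually (\<lambda>n. (\<forall>m. 0 < d n m) \<and> antimono (\<lambda>m. ln (d n m))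
      \<and> (\<forall>m. 2 * ln (d n (Suc m)) \<le> ln (d n m) + ln (d n (Suc (Suc m))))
      \<and> A * t n / 2 \<le> real (\<tau> n) \<and> \<tau> n < q n \<and> real (q n) - real (\<tau> n) \<le> 2 * (B - A) * t n
      \<and> ln \<delta> \<le> ln (d n (\<tau> n)) \<and> ln (d n (Suc (\<tau> n))) < ln \<delta> \<and> ln (d n (q n)) < ln \<delta>) sequentially"
    by (rule eventually_pos_choice) blast
  with AB dq t_large show thesis unfolding q_def by (intro that)
qed

lemma cutoff_disc_if_precutoff_log_convex:
  fixes d :: "nat \<Rightarrow> nat \<Rightarrow> real"
  assumes "\<And>n m. 0 \<le> d n m"
    and "eventually (\<lambda>n. (\<forall>m. 0 < d n m) \<and> antimono (d n)
       \<and> (\<forall>m. 2 * ln (d n (Suc m)) \<le> ln (d n m) + ln (d n (Suc (Suc m))))) sequentially"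
    and "0 < \<epsilon>" and "\<And>M. eventually (\<lambda>n. \<forall>m\<le>M. \<epsilon> < d n m) sequentially"
    and "precutoff_disc d"
  shows "cutoff_disc d"
proof -
  obtain \<tau> :: "nat \<Rightarrow> nat" and A B :: real and t :: "nat \<Rightarrow> real" and l :: real
    where \<tau>_pos: "\<And>n. 0 < \<tau> n" and AB: "0 < A" "A < B" and dq: "(\<lambda>n. d n (nat \<lceil>B * t n\<rceil>)) \<longlonglongrightarrow> 0"
    and t_large: "\<And>T. eventually (\<lambda>n. T \<le> t n) sequentially"
    and crossing: "eventually (\<lambda>n. (\<forall>m. 0 < d n m) \<and> antimono (\<lambda>m. ln (d n m))
      \<and> (\<forall>m. 2 * ln (d n (Suc m)) \<le> ln (d n m) + ln (d n (Suc (Suc m))))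
      \<and> A * t n / 2 \<le> real (\<tau> n) \<and> \<tau> n < nat \<lceil>B * t n\<rceil>
      \<and> real (nat \<lceil>B * t n\<rceil>) - real (\<tau> n) \<le> 2 * (B - A) * t n
      \<and> l \<le> ln (d n (\<tau> n)) \<and> ln (d n (Suc (\<tau> n))) < l \<and> ln (d n (nat \<lceil>B * t n\<rceil>)) < l) sequentially"
    using disc_level_crossing_times[OF assms] by blast
  have gap: "filterlim (\<lambda>n. l - ln (d n (nat \<lceil>B * t n\<rceil>))) at_top sequentially"
    by (rule filterlim_const_minus_ln_at_top[OF dq]) (use crossing in \<open>eventually_elim, blast\<close>)
  define \<kappa> where "\<kappa> a = min 1 (a * A / (8 * (B - A)))" for a
  have bounds: "eventually (\<lambda>n.
      0 < d n (nat \<lfloor>(1 - a) * real (\<tau> n)\<rfloor>)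
      \<and> l + \<kappa> a * (l - ln (d n (nat \<lceil>B * t n\<rceil>))) \<le> ln (d n (nat \<lfloor>(1 - a) * real (\<tau> n)\<rfloor>))
      \<and> 0 < d n (nat \<lceil>(1 + a) * real (\<tau> n)\<rceil>)
      \<and> ln (d n (nat \<lceil>(1 + a) * real (\<tau> n)\<rceil>)) \<le> l - \<kappa> a * (l - ln (d n (nat \<lceil>B * t n\<rceil>))))
      sequentially" if a: "0 < a" "a < 1" for a
    using crossing t_large[of "4 / (a * A)"]
  proof eventually_elim
    case (elim n)
    \<comment> \<open>The factor 8 in \<open>\<kappa>\<close> absorbs the rounding of the window ends to integers.\<close>
    have \<kappa>: "0 \<le> \<kappa> a" "\<kappa> a \<le> 1" using a AB by (auto simp: \<kappa>_def)
    have "4 \<le> a * (A * t n)" using elim(2) a AB by (simp add: field_simps)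
    have "a * (A * t n / 2) \<le> a * \<tau> n" using elim a by (intro mult_left_mono) auto
    then have "2 \<le> a * \<tau> n" using \<open>4 \<le> _\<close> by simp
    have "\<kappa> a * (real (nat \<lceil>B * t n\<rceil>) - real (\<tau> n)) \<le> a * A / (8 * (B - A)) * (2 * (B - A) * t n)"
      using \<kappa> elim by (intro mult_mono) (auto simp: \<kappa>_def)
    also have "\<dots> = a * (A * t n / 2) / 2" using AB by (simp add: field_simps)
    also have "\<dots> \<le> a * \<tau> n / 2" using \<open>a * (A * t n / 2) \<le> _\<close> by linarith
    finally have "\<kappa> a * (real (nat \<lceil>B * t n\<rceil>) - real (\<tau> n)) \<le> a * \<tau> n / 2" .
    then have "l + \<kappa> a * (l - ln (d n (nat \<lceil>B * t n\<rceil>))) \<le> ln (d n (nat \<lfloor>(1 - a) * real (\<tau> n)\<rfloor>))"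
      "ln (d n (nat \<lceil>(1 + a) * real (\<tau> n)\<rceil>)) \<le> l - \<kappa> a * (l - ln (d n (nat \<lceil>B * t n\<rceil>)))"
      using convex_seq_antimono_window_bounds[of "\<lambda>m. ln (d n m)" "\<tau> n" "nat \<lceil>B * t n\<rceil>" l a "\<kappa> a"]
        elim(1) a \<kappa> \<open>2 \<le> a * \<tau> n\<close> by auto
    then show ?case using elim(1) by blast
  qed
  show ?thesis
    by (rule cutoff_disc_if_log_bounds[OF \<tau>_pos gap _ bounds]) (use AB in \<open>auto simp: \<kappa>_def\<close>)
qed

section \<open>Reversible kernels as self-adjoint operators\<close>

definition kernel_op :: "'a set \<Rightarrow> ('a \<Rightarrow> 'a \<Rightarrow> real) \<Rightarrow> ('a \<Rightarrow> real) \<Rightarrow> 'a \<Rightarrow> real" where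
  "kernel_op S Q u y = (\<Sum>x\<in>S. Q y x * u x)"

definition l2_inner :: "'a set \<Rightarrow> ('a \<Rightarrow> real) \<Rightarrow> ('a \<Rightarrow> real) \<Rightarrow> ('a \<Rightarrow> real) \<Rightarrow> real" where
  "l2_inner S w u v = (\<Sum>y\<in>S. w y * u y * v y)"

lemma pi_sq_eq_l2_inner: "pi_sq S w u = l2_inner S w u u"
  unfolding pi_sq_def l2_inner_def by (intro sum.cong) (auto simp: power2_eq_square)

lemma l2_inner_cong:
  "(\<And>y. y \<in> S \<Longrightarrow> u y = u' y) \<Longrightarrow> (\<And>y. y \<in> S \<Longrightarrow> v y = v' y) \<Longrightarrow> l2_inner S w u v = l2_inner S w u' v'"
  unfolding l2_inner_def by (intro sum.cong) auto

lemma l2_inner_commute: "l2_inner S w u v = l2_inner S w v u"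
  unfolding l2_inner_def by (simp add: mult_ac)

lemma l2_inner_self_nonneg: "(\<And>y. y \<in> S \<Longrightarrow> 0 \<le> w y) \<Longrightarrow> 0 \<le> l2_inner S w u u"
  unfolding l2_inner_def by (intro sum_nonneg) (auto simp: mult.assoc)

lemma l2_inner_Cauchy_Schwarz:
  assumes "\<And>y. y \<in> S \<Longrightarrow> 0 \<le> w y"
  shows "(l2_inner S w u v)\<^sup>2 \<le> l2_inner S w u u * l2_inner S w v v"
proof -
  have eq: "l2_inner S w u v = (\<Sum>y\<in>S. (sqrt (w y) * u y) * (sqrt (w y) * v y))" for u v
    unfolding l2_inner_def by (rule sum.cong) (use assms in \<open>auto simp: algebra_simps\<close>)
  show ?thesis
    unfolding eq using Cauchy_Schwarz_ineq_sum by (simp add: power2_eq_square)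
qed

lemma l2_inner_kernel_op_self_adjoint:
  assumes "reversible S Q w"
  shows "l2_inner S w (kernel_op S Q u) v = l2_inner S w u (kernel_op S Q v)"
proof -
  have "l2_inner S w (kernel_op S Q u) v = (\<Sum>y\<in>S. \<Sum>x\<in>S. w y * Q y x * u x * v y)"
    unfolding l2_inner_def kernel_op_def by (simp add: sum_distrib_left sum_distrib_right algebra_simps)
  also have "\<dots> = (\<Sum>y\<in>S. \<Sum>x\<in>S. w x * Q x y * u x * v y)"
    using assms unfolding reversible_def by (intro sum.cong refl) auto
  also have "\<dots> = (\<Sum>x\<in>S. \<Sum>y\<in>S. w x * Q x y * u x * v y)" by (rule sum.swap)
  also have "\<dots> = l2_inner S w u (kernel_op S Q v)"
    unfolding l2_inner_def kernel_op_def by (simp add: sum_distrib_left sum_distrib_right algebra_simps)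
  finally show ?thesis .
qed

lemma l2_inner_kernel_op_contraction:
  assumes "stochastic S K" "reversible S K w" "\<And>y. y \<in> S \<Longrightarrow> 0 \<le> w y"
  shows "l2_inner S w (kernel_op S K u) (kernel_op S K u) \<le> l2_inner S w u u"
proof -
  have K: "\<And>x y. x \<in> S \<Longrightarrow> y \<in> S \<Longrightarrow> 0 \<le> K x y" "\<And>x. x \<in> S \<Longrightarrow> (\<Sum>y\<in>S. K x y) = 1"
    using assms(1) unfolding stochastic_def by auto
  have Jensen: "(kernel_op S K u y)\<^sup>2 \<le> (\<Sum>x\<in>S. K y x * u x * u x)" if "y \<in> S" for y
  proof -
    have "(l2_inner S (K y) u (\<lambda>_. 1))\<^sup>2 \<le> l2_inner S (K y) u u * l2_inner S (K y) (\<lambda>_. 1) (\<lambda>_. 1)"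
      by (rule l2_inner_Cauchy_Schwarz) (use K that in auto)
    then show ?thesis using K(2)[OF that] by (simp add: l2_inner_def kernel_op_def)
  qed
  have "l2_inner S w (kernel_op S K u) (kernel_op S K u) = (\<Sum>y\<in>S. w y * (kernel_op S K u y)\<^sup>2)"
    unfolding l2_inner_def by (simp add: power2_eq_square mult.assoc)
  also have "\<dots> \<le> (\<Sum>y\<in>S. w y * (\<Sum>x\<in>S. K y x * u x * u x))"
    by (intro sum_mono mult_left_mono Jensen assms(3))
  also have "\<dots> = (\<Sum>y\<in>S. \<Sum>x\<in>S. w x * K x y * u x * u x)"
    using assms(2) unfolding reversible_def by (simp add: sum_distrib_left mult.assoc)
  also have "\<dots> = (\<Sum>x\<in>S. w x * u x * u x * (\<Sum>y\<in>S. K x y))"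
    by (subst sum.swap) (simp add: sum_distrib_left algebra_simps)
  also have "\<dots> = l2_inner S w u u" unfolding l2_inner_def using K(2) by simp
  finally show ?thesis .
qed

lemma l2_inner_generator_nonpos:
  assumes "generator S L" "reversible S L w" "\<And>y. y \<in> S \<Longrightarrow> 0 \<le> w y"
  shows "l2_inner S w u (kernel_op S L u) \<le> 0"
proof -
  have offdiag: "\<And>x y. x \<in> S \<Longrightarrow> y \<in> S \<Longrightarrow> x \<noteq> y \<Longrightarrow> 0 \<le> L x y"
    and rows: "\<And>x. x \<in> S \<Longrightarrow> (\<Sum>y\<in>S. L x y) = 0"
    using assms(1) unfolding generator_def by auto
  have diag: "(\<Sum>y\<in>S. \<Sum>x\<in>S. w y * L y x * (u y * u y)) = 0"
  proof -
    have "(\<Sum>y\<in>S. \<Sum>x\<in>S. w y * L y x * (u y * u y)) = (\<Sum>y\<in>S. w y * (u y * u y) * (\<Sum>x\<in>S. L y x))"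
      by (simp add: sum_distrib_left mult_ac)
    then show ?thesis using rows by simp
  qed
  have "(\<Sum>y\<in>S. \<Sum>x\<in>S. w y * L y x * (u x * u x)) = (\<Sum>x\<in>S. \<Sum>y\<in>S. w x * L x y * (u x * u x))"
    using assms(2) unfolding reversible_def by (subst sum.swap) (intro sum.cong refl, auto)
  with diag have offdiag_sq: "(\<Sum>y\<in>S. \<Sum>x\<in>S. w y * L y x * (u x * u x)) = 0" by simp
  have inner: "l2_inner S w u (kernel_op S L u) = (\<Sum>y\<in>S. \<Sum>x\<in>S. w y * L y x * u y * u x)"
    unfolding l2_inner_def kernel_op_def by (simp add: sum_distrib_left algebra_simps)
  have "(\<Sum>y\<in>S. \<Sum>x\<in>S. w y * L y x * (u y - u x)\<^sup>2)
      = (\<Sum>y\<in>S. \<Sum>x\<in>S. w y * L y x * (u y * u y)) - 2 * (\<Sum>y\<in>S. \<Sum>x\<in>S. w y * L y x * u y * u x)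
        + (\<Sum>y\<in>S. \<Sum>x\<in>S. w y * L y x * (u x * u x))"
    by (simp add: power2_eq_square algebra_simps sum_subtractf sum.distrib sum_distrib_left)
  also have "\<dots> = - 2 * l2_inner S w u (kernel_op S L u)"
    using diag offdiag_sq inner by simp
  finally have "- 2 * l2_inner S w u (kernel_op S L u) = (\<Sum>y\<in>S. \<Sum>x\<in>S. w y * L y x * (u y - u x)\<^sup>2)" ..
  also have "\<dots> \<ge> 0"
  proof (intro sum_nonneg)
    fix x y assume "y \<in> S" "x \<in> S"
    then show "0 \<le> w y * L y x * (u y - u x)\<^sup>2"
      using offdiag[of y x] assms(3)[of y] by (cases "x = y") auto
  qed
  finally show ?thesis by simp
qed

text \<open>Reversibility turns the action of \<open>Q\<close> on measures into its action on densities w.r.t. \<open>w\<close>.\<close>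

lemma kernel_op_density:
  assumes "reversible S Q w" "\<And>x. x \<in> S \<Longrightarrow> 0 < w x" "y \<in> S"
  shows "(\<Sum>x\<in>S. \<nu> x * Q x y) / w y = kernel_op S Q (\<lambda>x. \<nu> x / w x) y"
  unfolding kernel_op_def sum_divide_distrib
proof (rule sum.cong[OF refl])
  fix x assume "x \<in> S"
  then have "w x * Q x y = w y * Q y x" using assms unfolding reversible_def by auto
  then show "\<nu> x * Q x y / w y = Q y x * (\<nu> x / w x)"
    using assms(2)[OF \<open>x \<in> S\<close>] assms(2)[OF \<open>y \<in> S\<close>] by (simp add: field_simps)
qed

lemma mpow_nonneg:
  assumes "\<And>x y. x \<in> S \<Longrightarrow> y \<in> S \<Longrightarrow> 0 \<le> Q x y" "y \<in> S"
  shows "0 \<le> mpow S Q m x y"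
  using assms(2) by (induction m arbitrary: y) (auto intro!: sum_nonneg mult_nonneg_nonneg assms(1))

lemma mpow_Suc_left_sum:
  "(\<Sum>x\<in>S. \<mu> x * mpow S Q (Suc m) x y) = (\<Sum>z\<in>S. (\<Sum>x\<in>S. \<mu> x * mpow S Q m x z) * Q z y)"
proof -
  have "(\<Sum>x\<in>S. \<mu> x * mpow S Q (Suc m) x y) = (\<Sum>x\<in>S. \<Sum>z\<in>S. \<mu> x * mpow S Q m x z * Q z y)"
    by (simp add: sum_distrib_left mult.assoc)
  also have "\<dots> = (\<Sum>z\<in>S. (\<Sum>x\<in>S. \<mu> x * mpow S Q m x z) * Q z y)"
    by (subst sum.swap) (simp add: sum_distrib_right)
  finally show ?thesis .
qed

lemma mpow_zero_left_sum:
  "finite S \<Longrightarrow> y \<in> S \<Longrightarrow> (\<Sum>x\<in>S. \<mu> x * mpow S Q 0 x y) = \<mu> y"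
  by (simp add: if_distrib[of "\<lambda>c. _ * c"] cong: if_cong)

lemma pos_if_reversible_irreducible:
  assumes nonneg: "\<And>x y. x \<in> S \<Longrightarrow> y \<in> S \<Longrightarrow> 0 \<le> Q x y"
    and irr: "irreducible_disc S Q" and "prob_on S w" and rev: "reversible S Q w" and "y \<in> S"
  shows "0 < w y"
proof (rule ccontr)
  assume "\<not> 0 < w y"
  then have "w y = 0" using \<open>prob_on S w\<close> \<open>y \<in> S\<close> unfolding prob_on_def by force
  have "w x = 0" if "y' \<in> S" "w y' = 0" "0 < mpow S Q m x y'" for m x y'
    using that
  proof (induction m arbitrary: y')
    case (Suc m)
    obtain z where "z \<in> S" "0 < mpow S Q m x z * Q z y'"
      using Suc.prems(3) sum_nonpos[of S "\<lambda>z. mpow S Q m x z * Q z y'"] by (force simp: not_less)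
    moreover have "0 \<le> mpow S Q m x z" "0 \<le> Q z y'"
      using mpow_nonneg[OF nonneg] nonneg \<open>y' \<in> S\<close> calculation(1) by auto
    ultimately have "0 < mpow S Q m x z" "0 < Q z y'" by (auto simp: zero_less_mult_iff)
    moreover have "w z * Q z y' = w y' * Q y' z"
      using rev \<open>z \<in> S\<close> \<open>y' \<in> S\<close> by (auto simp: reversible_def)
    ultimately show ?case using Suc.IH[of z] Suc.prems(2) \<open>z \<in> S\<close> by simp
  qed (simp split: if_splits)
  then have "\<forall>x\<in>S. w x = 0" using irr \<open>y \<in> S\<close> \<open>w y = 0\<close> unfolding irreducible_disc_def by blast
  then show False using \<open>prob_on S w\<close> unfolding prob_on_def by simp
qed

lemma pi_sq_density_minus_one:
  assumes "\<And>y. y \<in> S \<Longrightarrow> 0 < w y" "sum \<nu> S = 1" "sum w S = 1"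
  shows "pi_sq S w (\<lambda>y. \<nu> y / w y - 1) = pi_sq S w (\<lambda>y. \<nu> y / w y) - 1"
proof -
  have "pi_sq S w (\<lambda>y. \<nu> y / w y - 1) = (\<Sum>y\<in>S. (\<nu> y / w y)\<^sup>2 * w y - 2 * \<nu> y + w y)"
    unfolding pi_sq_def
  proof (rule sum.cong[OF refl])
    fix y assume "y \<in> S"
    then show "\<bar>\<nu> y / w y - 1\<bar>\<^sup>2 * w y = (\<nu> y / w y)\<^sup>2 * w y - 2 * \<nu> y + w y"
      using assms(1)[of y] by (simp add: power2_eq_square field_simps)
  qed
  also have "\<dots> = pi_sq S w (\<lambda>y. \<nu> y / w y) - 2 * sum \<nu> S + sum w S"
    unfolding pi_sq_def by (simp del: abs_divide add: sum.distrib sum_subtractf sum_distrib_left)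
  finally show ?thesis using assms by simp
qed

section \<open>Discrete time\<close>

lemma disc_chain_stationary_pos:
  assumes "disc_chain S K w \<mu>" "y \<in> S"
  shows "0 < w y"
  using assms pos_if_reversible_irreducible[of S K w y]
  unfolding disc_chain_def stochastic_def stationary_disc_def by blast

lemma disc_chain_density_step:
  assumes "disc_chain S K w \<mu>" "y \<in> S"
  shows "(\<Sum>x\<in>S. \<mu> x * mpow S K (Suc m) x y) / w y - 1
    = kernel_op S K (\<lambda>z. (\<Sum>x\<in>S. \<mu> x * mpow S K m x z) / w z - 1) y"
proof -
  have rows: "(\<Sum>x\<in>S. K y x) = 1" and "reversible S K w"
    using assms unfolding disc_chain_def stochastic_def by auto
  have "(\<Sum>x\<in>S. \<mu> x * mpow S K (Suc m) x y) / w y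
      = kernel_op S K (\<lambda>z. (\<Sum>x\<in>S. \<mu> x * mpow S K m x z) / w z) y"
    unfolding mpow_Suc_left_sum
    by (rule kernel_op_density[OF \<open>reversible S K w\<close> disc_chain_stationary_pos[OF assms(1)] assms(2)])
  then show ?thesis
    using rows by (simp add: kernel_op_def right_diff_distrib sum_subtractf)
qed

lemma d2_disc_Suc_le:
  assumes "disc_chain S K w \<mu>"
  shows "d2_disc S K w \<mu> (Suc m) \<le> d2_disc S K w \<mu> m"
proof -
  define G where "G m = (\<lambda>y. (\<Sum>x\<in>S. \<mu> x * mpow S K m x y) / w y - 1)" for m
  have "l2_inner S w (G (Suc m)) (G (Suc m)) = l2_inner S w (kernel_op S K (G m)) (kernel_op S K (G m))"
    using disc_chain_density_step[OF assms] by (intro l2_inner_cong) (simp_all add: G_def)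
  also have "\<dots> \<le> l2_inner S w (G m) (G m)"
    using assms disc_chain_stationary_pos[OF assms]
    by (intro l2_inner_kernel_op_contraction) (auto simp: disc_chain_def less_imp_le)
  finally show ?thesis by (simp add: d2_disc_def pi_sq_eq_l2_inner G_def)
qed

lemma d2_disc_log_convex:
  assumes "disc_chain S K w \<mu>"
  shows "(d2_disc S K w \<mu> (Suc m))\<^sup>2 \<le> d2_disc S K w \<mu> m * d2_disc S K w \<mu> (Suc (Suc m))"
proof -
  define G where "G m = (\<lambda>y. (\<Sum>x\<in>S. \<mu> x * mpow S K m x y) / w y - 1)" for m
  have w: "\<And>y. y \<in> S \<Longrightarrow> 0 \<le> w y" using disc_chain_stationary_pos[OF assms] by (simp add: less_imp_le)
  have step: "\<And>m y. y \<in> S \<Longrightarrow> G (Suc m) y = kernel_op S K (G m) y"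
    using disc_chain_density_step[OF assms] by (simp add: G_def)
  have rev: "reversible S K w" using assms by (simp add: disc_chain_def)
  have "l2_inner S w (G (Suc m)) (G (Suc m)) = l2_inner S w (kernel_op S K (G m)) (G (Suc m))"
    by (intro l2_inner_cong) (simp_all add: step)
  also have "\<dots> = l2_inner S w (G m) (kernel_op S K (G (Suc m)))"
    by (rule l2_inner_kernel_op_self_adjoint[OF rev])
  also have "\<dots> = l2_inner S w (G m) (G (Suc (Suc m)))"
    by (intro l2_inner_cong) (simp_all add: step)
  finally have "(l2_inner S w (G (Suc m)) (G (Suc m)))\<^sup>2
      \<le> l2_inner S w (G m) (G m) * l2_inner S w (G (Suc (Suc m))) (G (Suc (Suc m)))"
    using l2_inner_Cauchy_Schwarz[OF w] by simp
  then have "l2_inner S w (G (Suc m)) (G (Suc m))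
      \<le> sqrt (l2_inner S w (G m) (G m)) * sqrt (l2_inner S w (G (Suc (Suc m))) (G (Suc (Suc m))))"
    by (simp add: real_le_rsqrt real_sqrt_mult[symmetric])
  moreover have "d2_disc S K w \<mu> m = sqrt (l2_inner S w (G m) (G m))" for m
    by (simp add: d2_disc_def pi_sq_eq_l2_inner G_def)
  ultimately show ?thesis using l2_inner_self_nonneg[OF w, where u = "G (Suc m)"] by simp
qed

lemma d2_disc_one:
  assumes "disc_chain S K w \<mu>"
  shows "(d2_disc S K w \<mu> 1)\<^sup>2 = pi_sq S w (\<lambda>y. (\<Sum>x\<in>S. \<mu> x * K x y) / w y) - 1"
proof -
  have "finite S" "prob_on S \<mu>" "prob_on S w" "stochastic S K"
    using assms by (auto simp: disc_chain_def stationary_disc_def)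
  have one_step: "(\<Sum>x\<in>S. \<mu> x * mpow S K 1 x y) = (\<Sum>x\<in>S. \<mu> x * K x y)" for y
    using mpow_Suc_left_sum[of \<mu> S K 0 y] mpow_zero_left_sum[OF \<open>finite S\<close>] by simp
  have "(\<Sum>y\<in>S. \<Sum>x\<in>S. \<mu> x * K x y) = 1"
    using \<open>prob_on S \<mu>\<close> \<open>stochastic S K\<close>
    by (subst sum.swap) (simp add: sum_distrib_left[symmetric] prob_on_def stochastic_def)
  have "(d2_disc S K w \<mu> 1)\<^sup>2 = pi_sq S w (\<lambda>y. (\<Sum>x\<in>S. \<mu> x * K x y) / w y - 1)"
    unfolding d2_disc_def one_step using \<open>prob_on S w\<close>
    by (simp add: pi_sq_def prob_on_def sum_nonneg)
  also have "\<dots> = pi_sq S w (\<lambda>y. (\<Sum>x\<in>S. \<mu> x * K x y) / w y) - 1"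
    by (rule pi_sq_density_minus_one[OF disc_chain_stationary_pos[OF assms]])
      (use \<open>(\<Sum>y\<in>S. \<Sum>x\<in>S. _) = 1\<close> \<open>prob_on S w\<close> in \<open>auto simp: prob_on_def\<close>)
  finally show ?thesis .
qed

lemma log_convex_seq_pos_antimono:
  fixes h :: "nat \<Rightarrow> real"
  assumes nonneg: "\<And>m. 0 \<le> h m" and anti: "\<And>m. h (Suc m) \<le> h m"
    and log_convex: "\<And>m. (h (Suc m))\<^sup>2 \<le> h m * h (Suc (Suc m))" and "0 < h 1"
  shows "\<forall>m. 0 < h m" "antimono h" "\<forall>m. 2 * ln (h (Suc m)) \<le> ln (h m) + ln (h (Suc (Suc m)))"
proof -
  have pos_Suc: "0 < h (Suc m)" for m
  proof (induction m)
    case (Suc m)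
    then have "0 < h m * h (Suc (Suc m))" using log_convex[of m] by (smt (verit) power2_less_0 zero_less_power2)
    then show ?case using nonneg[of m] by (simp add: zero_less_mult_iff)
  qed (use \<open>0 < h 1\<close> in simp)
  then show pos: "\<forall>m. 0 < h m" using anti[of 0] by (metis less_le_trans not0_implies_Suc)
  show "antimono h" using anti by (simp add: antimono_iff_le_Suc)
  show "\<forall>m. 2 * ln (h (Suc m)) \<le> ln (h m) + ln (h (Suc (Suc m)))"
  proof
    fix m
    have "0 < h m" "0 < h (Suc m)" "0 < h (Suc (Suc m))" using pos by blast+
    then have "ln ((h (Suc m))\<^sup>2) \<le> ln (h m * h (Suc (Suc m)))"
      using log_convex[of m] by (subst ln_le_cancel_iff) auto
    then show "2 * ln (h (Suc m)) \<le> ln (h m) + ln (h (Suc (Suc m)))"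
      using \<open>0 < h m\<close> \<open>0 < h (Suc m)\<close> \<open>0 < h (Suc (Suc m))\<close> by (simp add: ln_mult ln_realpow)
  qed
qed

lemma d2_disc_log_convex_profile:
  assumes "disc_chain S K w \<mu>" "1 < pi_sq S w (\<lambda>y. (\<Sum>x\<in>S. \<mu> x * K x y) / w y)"
  shows "(\<forall>m. 0 < d2_disc S K w \<mu> m) \<and> antimono (d2_disc S K w \<mu>)
    \<and> (\<forall>m. 2 * ln (d2_disc S K w \<mu> (Suc m)) \<le> ln (d2_disc S K w \<mu> m) + ln (d2_disc S K w \<mu> (Suc (Suc m))))"
proof -
  have "\<forall>y\<in>S. 0 \<le> w y" using assms(1) by (simp add: disc_chain_def stationary_disc_def prob_on_def)
  then have nonneg: "0 \<le> d2_disc S K w \<mu> m" for m by (simp add: d2_disc_def pi_sq_def sum_nonneg)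
  moreover have "0 < d2_disc S K w \<mu> 1"
    using d2_disc_one[OF assms(1)] assms(2) nonneg[of 1] by (auto simp: less_le)
  ultimately show ?thesis
    using log_convex_seq_pos_antimono[of "d2_disc S K w \<mu>"] d2_disc_Suc_le[OF assms(1)]
      d2_disc_log_convex[OF assms(1)] by blast
qed

lemma d2_disc_gt_if_T2_disc_gt:
  assumes "ereal (real M) < T2_disc S K w \<mu> \<epsilon>" "m \<le> M"
  shows "\<epsilon> < d2_disc S K w \<mu> m"
proof (rule ccontr)
  assume "\<not> \<epsilon> < d2_disc S K w \<mu> m"
  then have "T2_disc S K w \<mu> \<epsilon> \<le> ereal (real m)"
    unfolding T2_disc_def by (intro INF_lower) simp
  also have "\<dots> \<le> ereal (real M)" using assms(2) by simp
  finally show False using assms(1) by simp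
qed

lemma disc_chains_cutoff_iff_precutoff:
  fixes S :: "nat \<Rightarrow> 'a set" and K :: "nat \<Rightarrow> 'a \<Rightarrow> 'a \<Rightarrow> real" and w \<mu> :: "nat \<Rightarrow> 'a \<Rightarrow> real"
  assumes chains: "\<forall>n. disc_chain (S n) (K n) (w n) (\<mu> n)"
    and "1 < liminf (\<lambda>n. ereal (pi_sq (S n) (w n) (\<lambda>y. (\<Sum>x\<in>S n. \<mu> n x * K n x y) / w n y)))"
    and "0 < \<epsilon>" and "(\<lambda>n. T2_disc (S n) (K n) (w n) (\<mu> n) \<epsilon>) \<longlonglongrightarrow> \<infinity>"
  shows "cutoff_disc (\<lambda>n. d2_disc (S n) (K n) (w n) (\<mu> n))
    \<longleftrightarrow> precutoff_disc (\<lambda>n. d2_disc (S n) (K n) (w n) (\<mu> n))"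
proof
  assume pc: "precutoff_disc (\<lambda>n. d2_disc (S n) (K n) (w n) (\<mu> n))"
  have nonneg: "0 \<le> d2_disc (S n) (K n) (w n) (\<mu> n) m" for n m
  proof -
    have "\<forall>y\<in>S n. 0 \<le> w n y"
      using chains by (simp add: disc_chain_def stationary_disc_def prob_on_def)
    then show ?thesis unfolding d2_disc_def pi_sq_def by (simp add: sum_nonneg)
  qed
  have "eventually (\<lambda>n. 1 < pi_sq (S n) (w n) (\<lambda>y. (\<Sum>x\<in>S n. \<mu> n x * K n x y) / w n y)) sequentially"
    using less_LiminfD[OF \<open>1 < liminf _\<close>[unfolded one_ereal_def]] by simp
  then have regular: "eventually (\<lambda>n. (\<forall>m. 0 < d2_disc (S n) (K n) (w n) (\<mu> n) m)
      \<and> antimono (d2_disc (S n) (K n) (w n) (\<mu> n))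
      \<and> (\<forall>m. 2 * ln (d2_disc (S n) (K n) (w n) (\<mu> n) (Suc m))
          \<le> ln (d2_disc (S n) (K n) (w n) (\<mu> n) m) + ln (d2_disc (S n) (K n) (w n) (\<mu> n) (Suc (Suc m)))))
      sequentially"
    by eventually_elim (rule d2_disc_log_convex_profile[OF chains[rule_format]])
  have slow: "eventually (\<lambda>n. \<forall>m\<le>M. \<epsilon> < d2_disc (S n) (K n) (w n) (\<mu> n) m) sequentially" for M
    using \<open>(\<lambda>n. T2_disc _ _ _ _ \<epsilon>) \<longlonglongrightarrow> \<infinity>\<close>[unfolded tendsto_PInfty, rule_format, of "real M"]
    by eventually_elim (blast intro: d2_disc_gt_if_T2_disc_gt)
  show "cutoff_disc (\<lambda>n. d2_disc (S n) (K n) (w n) (\<mu> n))"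
    by (rule cutoff_disc_if_precutoff_log_convex[OF nonneg regular \<open>0 < \<epsilon>\<close> slow pc])
qed (rule cutoff_disc_imp_precutoff_disc)

section \<open>Continuous time\<close>

lemma mpow_row_abs_sum_le:
  assumes "finite S"
  shows "(\<Sum>y\<in>S. \<bar>mpow S Q k x y\<bar>) \<le> (\<Sum>z\<in>S. \<Sum>y\<in>S. \<bar>Q z y\<bar>) ^ k"
proof (induction k)
  case 0
  have "(\<Sum>y\<in>S. \<bar>mpow S Q 0 x y\<bar>) = (if x \<in> S then 1 else 0)"
    using assms by (simp add: if_distrib[of abs] cong: if_cong)
  then show ?case by simp
next
  case (Suc k)
  define M where "M = (\<Sum>z\<in>S. \<Sum>y\<in>S. \<bar>Q z y\<bar>)"
  have row: "(\<Sum>y\<in>S. \<bar>Q z y\<bar>) \<le> M" if "z \<in> S" for z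
    unfolding M_def using assms that by (intro member_le_sum) (auto intro: sum_nonneg)
  have "(\<Sum>y\<in>S. \<bar>mpow S Q (Suc k) x y\<bar>) \<le> (\<Sum>y\<in>S. \<Sum>z\<in>S. \<bar>mpow S Q k x z\<bar> * \<bar>Q z y\<bar>)"
    by (intro sum_mono) (auto intro: order_trans[OF sum_abs] simp: abs_mult)
  also have "\<dots> = (\<Sum>z\<in>S. \<bar>mpow S Q k x z\<bar> * (\<Sum>y\<in>S. \<bar>Q z y\<bar>))"
    by (subst sum.swap) (simp add: sum_distrib_left)
  also have "\<dots> \<le> (\<Sum>z\<in>S. \<bar>mpow S Q k x z\<bar> * M)"
    by (intro sum_mono mult_left_mono row) auto
  also have "\<dots> \<le> M ^ k * M"
    using Suc.IH unfolding M_def sum_distrib_right[symmetric] by (intro mult_right_mono) (auto intro: sum_nonneg)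
  finally show ?case by (simp add: M_def mult.commute)
qed

lemma heat_power_series: "heat S Q t x y = (\<Sum>k. mpow S Q k x y / fact k * t ^ k)"
  unfolding heat_def by (simp add: mult_ac)

lemma heat_series_summable:
  assumes "finite S" "y \<in> S"
  shows "summable (\<lambda>k. mpow S Q k x y / fact k * t ^ k)"
proof (rule summable_comparison_test'[OF summable_exp[of "(\<Sum>z\<in>S. \<Sum>y\<in>S. \<bar>Q z y\<bar>) * \<bar>t\<bar>"]])
  fix k
  have "\<bar>mpow S Q k x y\<bar> \<le> (\<Sum>z\<in>S. \<Sum>y\<in>S. \<bar>Q z y\<bar>) ^ k"
    by (rule order_trans[OF member_le_sum mpow_row_abs_sum_le[OF assms(1)]]) (use assms in auto)
  then show "norm (mpow S Q k x y / fact k * t ^ k) \<le> inverse (fact k) * ((\<Sum>z\<in>S. \<Sum>y\<in>S. \<bar>Q z y\<bar>) * \<bar>t\<bar>) ^ k"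
    by (simp add: abs_mult power_abs power_mult_distrib divide_inverse mult_ac mult_left_mono)
qed

lemma heat_zero: "heat S Q 0 x y = (if x = y then 1 else 0)"
  unfolding heat_power_series using powser_zero[of "\<lambda>k. mpow S Q k x y / fact k"] by simp

lemma heat_has_derivative:
  assumes "finite S" "y \<in> S"
  shows "((\<lambda>t. heat S Q t x y) has_real_derivative (\<Sum>z\<in>S. heat S Q t x z * Q z y)) (at t)"
proof -
  have "((\<lambda>t. heat S Q t x y) has_real_derivative (\<Sum>k. diffs (\<lambda>k. mpow S Q k x y / fact k) k * t ^ k)) (at t)"
    unfolding heat_power_series
    by (rule termdiffs_strong_converges_everywhere) (rule heat_series_summable[OF assms])
  moreover have "diffs (\<lambda>k. mpow S Q k x y / fact k) k * t ^ k
      = (\<Sum>z\<in>S. mpow S Q k x z / fact k * t ^ k * Q z y)" for k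
  proof -
    have "diffs (\<lambda>k. mpow S Q k x y / fact k) k = mpow S Q (Suc k) x y / fact k"
      by (simp add: diffs_def del: mpow.simps)
    then show ?thesis
      by (simp add: sum_distrib_left sum_distrib_right sum_divide_distrib mult_ac)
  qed
  moreover have "(\<Sum>k. \<Sum>z\<in>S. mpow S Q k x z / fact k * t ^ k * Q z y) = (\<Sum>z\<in>S. heat S Q t x z * Q z y)"
  proof -
    have summable: "summable (\<lambda>k. mpow S Q k x z / fact k * t ^ k)" if "z \<in> S" for z
      by (rule heat_series_summable[OF assms(1) that])
    then have "(\<Sum>k. \<Sum>z\<in>S. mpow S Q k x z / fact k * t ^ k * Q z y)
        = (\<Sum>z\<in>S. \<Sum>k. mpow S Q k x z / fact k * t ^ k * Q z y)"
      by (intro suminf_sum summable_mult2)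
    also have "\<dots> = (\<Sum>z\<in>S. heat S Q t x z * Q z y)"
      unfolding heat_power_series by (rule sum.cong[OF refl]) (rule suminf_mult2[symmetric, OF summable])
    finally show ?thesis .
  qed
  ultimately show ?thesis by simp
qed

lemma l2_inner_has_derivative:
  assumes "\<And>y. y \<in> S \<Longrightarrow> ((\<lambda>t. u t y) has_real_derivative u' y) (at t)"
    and "\<And>y. y \<in> S \<Longrightarrow> ((\<lambda>t. v t y) has_real_derivative v' y) (at t)"
  shows "((\<lambda>t. l2_inner S w (u t) (v t)) has_real_derivative
    l2_inner S w u' (v t) + l2_inner S w (u t) v') (at t)"
proof -
  have "((\<lambda>t. l2_inner S w (u t) (v t)) has_real_derivative
      (\<Sum>y\<in>S. w y * u' y * v t y + v' y * (w y * u t y))) (at t)"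
    unfolding l2_inner_def by (intro DERIV_sum DERIV_mult DERIV_cmult assms)
  then show ?thesis by (simp add: l2_inner_def sum.distrib algebra_simps)
qed

lemma kernel_op_has_derivative:
  assumes "\<And>y. y \<in> S \<Longrightarrow> ((\<lambda>t. u t y) has_real_derivative u' y) (at t)"
  shows "((\<lambda>t. kernel_op S Q (u t) y) has_real_derivative kernel_op S Q u' y) (at t)"
  unfolding kernel_op_def by (intro DERIV_sum DERIV_cmult assms)

lemma reversible_flow_sq_norm_derivatives:
  assumes "generator S L" "reversible S L w" and w: "\<And>y. y \<in> S \<Longrightarrow> 0 \<le> w y"
    and flow: "\<And>t y. y \<in> S \<Longrightarrow> ((\<lambda>t. u t y) has_real_derivative kernel_op S L (u t) y) (at t)"
  defines "f \<equiv> \<lambda>t. l2_inner S w (u t) (u t)"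
    and "f' \<equiv> \<lambda>t. 2 * l2_inner S w (u t) (kernel_op S L (u t))"
    and "f'' \<equiv> \<lambda>t. 4 * l2_inner S w (kernel_op S L (u t)) (kernel_op S L (u t))"
  shows "(f has_real_derivative f' t) (at t)" "(f' has_real_derivative f'' t) (at t)"
    and "f' t \<le> 0" "(f' t)\<^sup>2 \<le> f t * f'' t"
proof -
  have "((\<lambda>t. l2_inner S w (u t) (u t)) has_real_derivative
      l2_inner S w (kernel_op S L (u t)) (u t) + l2_inner S w (u t) (kernel_op S L (u t))) (at t)"
    by (intro l2_inner_has_derivative flow)
  then show "(f has_real_derivative f' t) (at t)"
    by (simp add: f_def f'_def l2_inner_commute[of S w "kernel_op S L (u t)"])
  have "((\<lambda>t. l2_inner S w (u t) (kernel_op S L (u t))) has_real_derivative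
      l2_inner S w (kernel_op S L (u t)) (kernel_op S L (u t))
      + l2_inner S w (u t) (kernel_op S L (kernel_op S L (u t)))) (at t)"
    by (intro l2_inner_has_derivative flow kernel_op_has_derivative)
  moreover have "l2_inner S w (u t) (kernel_op S L (kernel_op S L (u t)))
      = l2_inner S w (kernel_op S L (u t)) (kernel_op S L (u t))"
    using l2_inner_kernel_op_self_adjoint[OF assms(2)] by simp
  ultimately show "(f' has_real_derivative f'' t) (at t)"
    unfolding f'_def f''_def by (auto dest: DERIV_cmult[where c = 2])
  show "f' t \<le> 0"
    using l2_inner_generator_nonpos[OF assms(1,2) w] by (simp add: f'_def)
  show "(f' t)\<^sup>2 \<le> f t * f'' t"
    using l2_inner_Cauchy_Schwarz[OF w, where u = "u t" and v = "kernel_op S L (u t)"]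
    by (simp add: f_def f'_def f''_def power_mult_distrib)
qed

lemma cont_chain_stationary_pos:
  assumes "cont_chain S L w \<mu>" "y \<in> S"
  shows "0 < w y"
proof -
  define Q where "Q = (\<lambda>x y. if x = y then 0 else L x y)"
  have "prob_on S w" "irreducible_disc S Q"
    using assms by (auto simp: cont_chain_def stationary_cont_def irreducible_cont_def Q_def)
  moreover have "0 \<le> Q x z" if "x \<in> S" "z \<in> S" for x z
    using assms that by (auto simp: cont_chain_def generator_def Q_def)
  moreover have "reversible S Q w"
    using assms by (auto simp: cont_chain_def reversible_def Q_def)
  ultimately show ?thesis using pos_if_reversible_irreducible[OF _ _ _ _ assms(2)] by blast
qed

lemma cont_chain_density_flow:
  assumes "cont_chain S L w \<mu>" "y \<in> S"
  defines "u \<equiv> \<lambda>t y. (\<Sum>x\<in>S. \<mu> x * heat S L t x y) / w y - 1"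
  shows "((\<lambda>t. u t y) has_real_derivative kernel_op S L (u t) y) (at t)"
proof -
  have "finite S" "reversible S L w" and rows: "(\<Sum>x\<in>S. L y x) = 0"
    using assms by (auto simp: cont_chain_def generator_def)
  have "((\<lambda>t. \<Sum>x\<in>S. \<mu> x * heat S L t x y) has_real_derivative
      (\<Sum>x\<in>S. \<mu> x * (\<Sum>z\<in>S. heat S L t x z * L z y))) (at t)" (is "(?\<rho> has_real_derivative ?D) _")
    by (intro DERIV_sum DERIV_cmult heat_has_derivative \<open>finite S\<close> \<open>y \<in> S\<close>)
  then have "((\<lambda>t. ?\<rho> t / w y - 1) has_real_derivative ?D / w y - 0) (at t)"
    by (intro DERIV_diff DERIV_cdivide DERIV_const)
  moreover have "(\<Sum>x\<in>S. \<mu> x * (\<Sum>z\<in>S. heat S L t x z * L z y))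
      = (\<Sum>z\<in>S. (\<Sum>x\<in>S. \<mu> x * heat S L t x z) * L z y)"
  proof -
    have "(\<Sum>x\<in>S. \<mu> x * (\<Sum>z\<in>S. heat S L t x z * L z y))
        = (\<Sum>x\<in>S. \<Sum>z\<in>S. \<mu> x * heat S L t x z * L z y)"
      by (simp add: sum_distrib_left mult.assoc)
    also have "\<dots> = (\<Sum>z\<in>S. (\<Sum>x\<in>S. \<mu> x * heat S L t x z) * L z y)"
      by (subst sum.swap) (simp add: sum_distrib_right)
    finally show ?thesis .
  qed
  moreover have "(\<Sum>z\<in>S. (\<Sum>x\<in>S. \<mu> x * heat S L t x z) * L z y) / w y = kernel_op S L (u t) y"
    using kernel_op_density[OF \<open>reversible S L w\<close> cont_chain_stationary_pos[OF assms(1)] assms(2)] rows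
    by (simp add: u_def kernel_op_def right_diff_distrib sum_subtractf)
  ultimately show ?thesis by (simp add: u_def)
qed

lemma log_derivative_mono:
  fixes f f' f'' :: "real \<Rightarrow> real"
  assumes D1: "\<And>t. (f has_real_derivative f' t) (at t)" and D2: "\<And>t. (f' has_real_derivative f'' t) (at t)"
    and CS: "\<And>t. (f' t)\<^sup>2 \<le> f t * f'' t"
    and "x \<le> y" and pos: "\<And>t. x \<le> t \<Longrightarrow> t \<le> y \<Longrightarrow> 0 < f t"
  shows "f' x / f x \<le> f' y / f y"
proof (rule DERIV_nonneg_imp_nondecreasing[OF \<open>x \<le> y\<close>])
  fix t assume "x \<le> t" "t \<le> y"
  then have "0 < f t" by (rule pos)
  then have "((\<lambda>t. f' t / f t) has_real_derivative (f'' t * f t - f' t * f' t) / (f t * f t)) (at t)"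
    by (intro DERIV_divide D1 D2) simp
  moreover have "0 \<le> (f'' t * f t - f' t * f' t) / (f t * f t)"
    using CS[of t] by (simp add: power2_eq_square algebra_simps)
  ultimately show "\<exists>D. ((\<lambda>t. f' t / f t) has_real_derivative D) (at t) \<and> 0 \<le> D" by blast
qed

lemma ln_ge_linear_while_pos:
  fixes f f' f'' :: "real \<Rightarrow> real"
  assumes D1: "\<And>t. (f has_real_derivative f' t) (at t)" and D2: "\<And>t. (f' has_real_derivative f'' t) (at t)"
    and CS: "\<And>t. (f' t)\<^sup>2 \<le> f t * f'' t"
    and "0 \<le> s" and pos: "\<And>r. 0 \<le> r \<Longrightarrow> r \<le> s \<Longrightarrow> 0 < f r"
  shows "ln (f 0) + f' 0 / f 0 * s \<le> ln (f s)"
proof -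
  have "ln (f 0) - f' 0 / f 0 * 0 \<le> ln (f s) - f' 0 / f 0 * s"
  proof (rule DERIV_nonneg_imp_nondecreasing[OF \<open>0 \<le> s\<close>])
    fix r assume "0 \<le> r" "r \<le> s"
    then have "0 < f r" "0 < f 0" using pos \<open>0 \<le> s\<close> by auto
    then have "((\<lambda>r. ln (f r) - f' 0 / f 0 * r) has_real_derivative f' r / f r - f' 0 / f 0) (at r)"
      by (auto intro!: derivative_eq_intros D1)
    moreover have "f' 0 / f 0 \<le> f' r / f r"
      using pos \<open>r \<le> s\<close> by (intro log_derivative_mono[OF D1 D2 CS \<open>0 \<le> r\<close>]) auto
    ultimately show "\<exists>D. ((\<lambda>r. ln (f r) - f' 0 / f 0 * r) has_real_derivative D) (at r) \<and> 0 \<le> D"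
      by auto
  qed
  then show ?thesis by simp
qed

lemma pos_if_nonincreasing_log_convex:
  fixes f f' f'' :: "real \<Rightarrow> real"
  assumes D1: "\<And>t. (f has_real_derivative f' t) (at t)" and D2: "\<And>t. (f' has_real_derivative f'' t) (at t)"
    and nonneg: "\<And>t. 0 \<le> f t" and decr: "\<And>t. f' t \<le> 0" and CS: "\<And>t. (f' t)\<^sup>2 \<le> f t * f'' t"
    and "0 < f 0" "0 \<le> t"
  shows "0 < f t"
proof (rule ccontr)
  assume "\<not> 0 < f t"
  have cont: "isCont f s" for s using D1 by (rule DERIV_isCont)
  define Z where "Z = {s. 0 \<le> s \<and> f s = 0}"
  have "closed Z" unfolding Z_def
    by (intro closed_Collect_conj closed_Collect_le closed_Collect_eq continuous_intros
        continuous_at_imp_continuous_on ballI cont)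
  moreover have "t \<in> Z" using \<open>\<not> 0 < f t\<close> nonneg[of t] \<open>0 \<le> t\<close> by (simp add: Z_def)
  moreover have "bdd_below Z" unfolding Z_def by (rule bdd_belowI[of _ 0]) auto
  ultimately have "Inf Z \<in> Z" by (intro closed_contains_Inf) auto
  define z where "z = Inf Z"
  have "f z = 0" "0 < z" using \<open>Inf Z \<in> Z\<close> \<open>0 < f 0\<close> by (auto simp: z_def Z_def less_le)
  have pos: "0 < f s" if "0 \<le> s" "s < z" for s
    using cInf_lower[OF _ \<open>bdd_below Z\<close>, of s] that nonneg[of s] by (force simp: z_def Z_def less_le)
  define c where "c = f' 0 / f 0"
  have "c \<le> 0" using decr[of 0] \<open>0 < f 0\<close> by (simp add: c_def divide_nonpos_pos)
  \<comment> \<open>Up to the first zero \<open>z\<close>, \<open>f\<close> stays above \<open>f 0 * exp (c * z) > 0\<close>; continuity at \<open>z\<close> then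
    contradicts \<open>f z = 0\<close>.\<close>
  have "f 0 * exp (c * z) \<le> f s" if "0 \<le> s" "s < z" for s
  proof -
    have "ln (f 0) + c * s \<le> ln (f s)"
      unfolding c_def using pos that by (intro ln_ge_linear_while_pos[OF D1 D2 CS]) auto
    moreover have "c * z \<le> c * s" using \<open>c \<le> 0\<close> that by (intro mult_left_mono_neg) auto
    ultimately have "ln (f 0 * exp (c * z)) \<le> ln (f s)" using \<open>0 < f 0\<close> by (simp add: ln_mult)
    then show ?thesis using \<open>0 < f 0\<close> pos that by simp
  qed
  moreover have "(f \<longlongrightarrow> f z) (at_left z)"
    using cont[of z] by (simp add: isCont_def filterlim_at_split)
  moreover have "eventually (\<lambda>s. s \<in> {0<..<z}) (at_left z)"
    by (rule eventually_at_left_real[OF \<open>0 < z\<close>])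
  ultimately have "f 0 * exp (c * z) \<le> f z"
    by (intro tendsto_lowerbound[of f "f z" "at_left z"]) (auto elim: eventually_mono)
  moreover have "0 < f 0 * exp (c * z)" using \<open>0 < f 0\<close> by simp
  ultimately show False using \<open>f z = 0\<close> by simp
qed

lemma sqrt_pos_log_convex_antimono:
  fixes f f' f'' :: "real \<Rightarrow> real"
  assumes D1: "\<And>t. (f has_real_derivative f' t) (at t)" and D2: "\<And>t. (f' has_real_derivative f'' t) (at t)"
    and nonneg: "\<And>t. 0 \<le> f t" and decr: "\<And>t. f' t \<le> 0" and CS: "\<And>t. (f' t)\<^sup>2 \<le> f t * f'' t"
    and "0 < f 0"
  shows "\<forall>t\<ge>0. 0 < sqrt (f t)" "convex_on {0..} (\<lambda>t. ln (sqrt (f t)))"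
    "antimono_on {0..} (\<lambda>t. sqrt (f t))" "continuous_on {0..} (\<lambda>t. sqrt (f t))"
proof -
  have pos: "0 < f t" if "0 \<le> t" for t
    by (rule pos_if_nonincreasing_log_convex[OF D1 D2 nonneg decr CS \<open>0 < f 0\<close> that])
  then show "\<forall>t\<ge>0. 0 < sqrt (f t)" by simp
  have "convex_on {0..} (\<lambda>t. ln (f t) / 2)"
  proof (rule convex_on_realI[where f' = "\<lambda>t. f' t / f t / 2"])
    show "((\<lambda>t. ln (f t) / 2) has_real_derivative f' x / f x / 2) (at x)" if "x \<in> {0..}" for x
      using pos[of x] that by (auto intro!: derivative_eq_intros D1)
    show "f' x / f x / 2 \<le> f' y / f y / 2" if "x \<in> {0..}" "y \<in> {0..}" "x \<le> y" for x y
      using log_derivative_mono[OF D1 D2 CS \<open>x \<le> y\<close>] pos that by auto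
  qed simp
  then show "convex_on {0..} (\<lambda>t. ln (sqrt (f t)))"
    using nonneg by (simp add: ln_sqrt)
  show "antimono_on {0..} (\<lambda>t. sqrt (f t))"
  proof (rule monotone_onI)
    fix s t :: real assume "s \<le> t"
    have "f t \<le> f s" by (rule DERIV_nonpos_imp_nonincreasing[OF \<open>s \<le> t\<close>]) (use D1 decr in blast)
    then show "sqrt (f t) \<le> sqrt (f s)" by simp
  qed
  show "continuous_on {0..} (\<lambda>t. sqrt (f t))"
    using DERIV_isCont[OF D1] by (intro continuous_on_real_sqrt continuous_at_imp_continuous_on) auto
qed

lemma d2_cont_log_convex_profile:
  assumes "cont_chain S L w \<mu>" "1 < pi_sq S w (\<lambda>y. \<mu> y / w y)"
  shows "(\<forall>t\<ge>0. 0 < d2_cont S L w \<mu> t) \<and> convex_on {0..} (\<lambda>t. ln (d2_cont S L w \<mu> t))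
    \<and> antimono_on {0..} (d2_cont S L w \<mu>) \<and> continuous_on {0..} (d2_cont S L w \<mu>)"
proof -
  define u where "u = (\<lambda>t y. (\<Sum>x\<in>S. \<mu> x * heat S L t x y) / w y - 1)"
  define f where "f = (\<lambda>t. l2_inner S w (u t) (u t))"
  have "finite S" "generator S L" "reversible S L w" "prob_on S \<mu>" "prob_on S w"
    using assms(1) by (auto simp: cont_chain_def stationary_cont_def)
  have w: "\<And>y. y \<in> S \<Longrightarrow> 0 \<le> w y" using cont_chain_stationary_pos[OF assms(1)] by (simp add: less_imp_le)
  define f' where "f' = (\<lambda>t. 2 * l2_inner S w (u t) (kernel_op S L (u t)))"
  define f'' where "f'' = (\<lambda>t. 4 * l2_inner S w (kernel_op S L (u t)) (kernel_op S L (u t)))"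
  have deriv: "((\<lambda>t. u t y) has_real_derivative kernel_op S L (u t) y) (at t)" if "y \<in> S" for t y
    unfolding u_def by (rule cont_chain_density_flow[OF assms(1) that])
  have flow: "(f has_real_derivative f' t) (at t)" "(f' has_real_derivative f'' t) (at t)"
    "f' t \<le> 0" "(f' t)\<^sup>2 \<le> f t * f'' t" for t
    unfolding f_def f'_def f''_def
    using reversible_flow_sq_norm_derivatives[OF \<open>generator S L\<close> \<open>reversible S L w\<close> w deriv] by blast+
  have "f 0 = pi_sq S w (\<lambda>y. \<mu> y / w y - 1)"
    using \<open>finite S\<close> unfolding f_def u_def pi_sq_eq_l2_inner
    by (intro l2_inner_cong) (simp_all add: heat_zero if_distrib[of "\<lambda>c. _ * c"] cong: if_cong)
  also have "\<dots> = pi_sq S w (\<lambda>y. \<mu> y / w y) - 1"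
    using \<open>prob_on S \<mu>\<close> \<open>prob_on S w\<close>
    by (intro pi_sq_density_minus_one cont_chain_stationary_pos[OF assms(1)]) (auto simp: prob_on_def)
  finally have "0 < f 0" using assms(2) by simp
  have "d2_cont S L w \<mu> = (\<lambda>t. sqrt (f t))"
    by (simp add: fun_eq_iff d2_cont_def pi_sq_eq_l2_inner f_def u_def)
  moreover have "0 \<le> f t" for t unfolding f_def by (rule l2_inner_self_nonneg[OF w])
  ultimately show ?thesis
    using sqrt_pos_log_convex_antimono[OF flow(1,2) _ flow(3,4) \<open>0 < f 0\<close>] by simp
qed

lemma cont_chains_cutoff_iff_precutoff:
  fixes S :: "nat \<Rightarrow> 'a set" and L :: "nat \<Rightarrow> 'a \<Rightarrow> 'a \<Rightarrow> real" and w \<mu> :: "nat \<Rightarrow> 'a \<Rightarrow> real"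
  assumes chains: "\<forall>n. cont_chain (S n) (L n) (w n) (\<mu> n)"
    and "1 < liminf (\<lambda>n. ereal (pi_sq (S n) (w n) (\<lambda>y. \<mu> n y / w n y)))"
  shows "cutoff_cont (\<lambda>n. d2_cont (S n) (L n) (w n) (\<mu> n))
    \<longleftrightarrow> precutoff_cont (\<lambda>n. d2_cont (S n) (L n) (w n) (\<mu> n))"
proof
  assume pc: "precutoff_cont (\<lambda>n. d2_cont (S n) (L n) (w n) (\<mu> n))"
  have nonneg: "0 \<le> d2_cont (S n) (L n) (w n) (\<mu> n) t" for n t
  proof -
    have "\<forall>y\<in>S n. 0 \<le> w n y"
      using chains by (simp add: cont_chain_def stationary_cont_def prob_on_def)
    then show ?thesis unfolding d2_cont_def pi_sq_def by (simp add: sum_nonneg)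
  qed
  have "eventually (\<lambda>n. 1 < pi_sq (S n) (w n) (\<lambda>y. \<mu> n y / w n y)) sequentially"
    using less_LiminfD[OF \<open>1 < liminf _\<close>[unfolded one_ereal_def]] by simp
  then have regular: "eventually (\<lambda>n. (\<forall>t\<ge>0. 0 < d2_cont (S n) (L n) (w n) (\<mu> n) t)
      \<and> convex_on {0..} (\<lambda>t. ln (d2_cont (S n) (L n) (w n) (\<mu> n) t))
      \<and> antimono_on {0..} (d2_cont (S n) (L n) (w n) (\<mu> n))
      \<and> continuous_on {0..} (d2_cont (S n) (L n) (w n) (\<mu> n))) sequentially"
    by eventually_elim (rule d2_cont_log_convex_profile[OF chains[rule_format]])
  show "cutoff_cont (\<lambda>n. d2_cont (S n) (L n) (w n) (\<mu> n))"
    by (rule cutoff_cont_if_precutoff_log_convex[OF nonneg regular pc])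
qed (rule cutoff_cont_imp_precutoff_cont)

theorem theorem3p1:
  fixes Sc :: "nat \<Rightarrow> 'a set" and L :: "nat \<Rightarrow> 'a \<Rightarrow> 'a \<Rightarrow> real"
    and \<pi>c \<mu>c :: "nat \<Rightarrow> 'a \<Rightarrow> real"
    and Sd :: "nat \<Rightarrow> 'b set" and K :: "nat \<Rightarrow> 'b \<Rightarrow> 'b \<Rightarrow> real"
    and \<pi>d \<mu>d :: "nat \<Rightarrow> 'b \<Rightarrow> real"
  shows
   "((\<forall>n. cont_chain (Sc n) (L n) (\<pi>c n) (\<mu>c n)) \<and>
     liminf (\<lambda>n. ereal (pi_sq (Sc n) (\<pi>c n) (\<lambda>y. \<mu>c n y / \<pi>c n y))) > 1
     \<longrightarrow> (cutoff_cont (\<lambda>n. d2_cont (Sc n) (L n) (\<pi>c n) (\<mu>c n))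
          \<longleftrightarrow> precutoff_cont (\<lambda>n. d2_cont (Sc n) (L n) (\<pi>c n) (\<mu>c n))))
    \<and>
    ((\<forall>n. disc_chain (Sd n) (K n) (\<pi>d n) (\<mu>d n)) \<and>
     liminf (\<lambda>n. ereal (pi_sq (Sd n) (\<pi>d n)
        (\<lambda>y. (\<Sum>x\<in>Sd n. \<mu>d n x * K n x y) / \<pi>d n y))) > 1 \<and>
     (\<exists>\<epsilon>0>0. (\<lambda>n. T2_disc (Sd n) (K n) (\<pi>d n) (\<mu>d n) \<epsilon>0) \<longlonglongrightarrow> \<infinity>)
     \<longrightarrow> (cutoff_disc (\<lambda>n. d2_disc (Sd n) (K n) (\<pi>d n) (\<mu>d n))
          \<longleftrightarrow> precutoff_disc (\<lambda>n. d2_disc (Sd n) (K n) (\<pi>d n) (\<mu>d n))))"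
  using cont_chains_cutoff_iff_precutoff[of Sc L \<pi>c \<mu>c] disc_chains_cutoff_iff_precutoff[of Sd K \<pi>d \<mu>d] by blast

end
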